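(* Let $A\subseteq\mathcal{R}$ be outer measurable and let $(J_n)_{n\ge1}$ be a sequence of pairwise disjoint intervals in $\mathcal{R}$ with $\lim_{n\to\infty}l(J_n)=0$. Then $A\cap\bigcup_{n=1}^\infty J_n$ is outer measurable, the series $\sum_{n=1}^\infty M_u(A\cap J_n)$ converges in $\mathcal{R}$, and $$M_u\Big(A\cap\bigcup_{n=1}^\infty J_n\Big)=\sum_{n=1}^\infty M_u(A\cap J_n).$$
   Context: $\mathcal{R}$ denotes the Levi-Civita field: functions $x:\mathbb{Q}\to\mathbb{R}$ with left-finite support, with componentwise addition and formal power series multiplication, ordered by $x>0$ iff $x\ne0$ and $x[\min\operatorname{supp}x]>0$; it is a non-Archimedean ordered field extension of $\mathbb{R}$, Cauchy complete in the order topology, in which all limits and series are taken (a series $\sum a_n$ converges iff $a_n\to0$). An interval is a set $[a,b],[a,b),(a,b]$ or $(a,b)$ with $a<b$ in $\mathcal{R}$, of length $l=b-a$. A cover of $A\subseteq\mathcal{R}$ is a sequence of intervals $(S_n)_{n\ge1}$ with $A\subseteq\bigcup_n S_n$ and $\sum_n l(S_n)$ convergent in $\mathcal{R}$. $A$ is called outer measurable if the infimum $\inf\{\sum_n l(S_n): (S_n)\text{ a cover of }A\}$ exists in $\mathcal{R}$; this infimum is then called the outer measure $M_u(A)$. (Intersections of an outer measurable set with an interval are outer measurable.) *)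

theory Defs
  imports Main "HOL.Real"
begin

section \<open>The Levi-Civita field\<close>

typedef lc = "{x :: rat \<Rightarrow> real. \<forall>q. finite {r. r < q \<and> x r \<noteq> 0}}"
  morphisms lc_coeff Abs_lc
  by (rule exI[of _ "\<lambda>_. 0"]) simp

definition lc_zero :: lc where
  "lc_zero = Abs_lc (\<lambda>_. 0)"

definition lc_add :: "lc \<Rightarrow> lc \<Rightarrow> lc" where
  "lc_add x y = Abs_lc (\<lambda>q. lc_coeff x q + lc_coeff y q)"

definition lc_neg :: "lc \<Rightarrow> lc" where
  "lc_neg x = Abs_lc (\<lambda>q. - lc_coeff x q)"

definition lc_sub :: "lc \<Rightarrow> lc \<Rightarrow> lc" where
  "lc_sub x y = lc_add x (lc_neg y)"

text \<open>Formal power series (Cauchy) product; the sum is finite by left-finiteness.\<close>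
definition lc_mult :: "lc \<Rightarrow> lc \<Rightarrow> lc" where
  "lc_mult x y = Abs_lc (\<lambda>q. \<Sum>(a,b)\<in>{(a,b). a + b = q \<and> lc_coeff x a \<noteq> 0 \<and> lc_coeff y b \<noteq> 0}.
                                lc_coeff x a * lc_coeff y b)"

definition lc_pos :: "lc \<Rightarrow> bool" where
  "lc_pos x \<longleftrightarrow> (\<exists>q. lc_coeff x q > 0 \<and> (\<forall>r<q. lc_coeff x r = 0))"

definition lc_less :: "lc \<Rightarrow> lc \<Rightarrow> bool" where
  "lc_less x y \<longleftrightarrow> lc_pos (lc_sub y x)"

definition lc_le :: "lc \<Rightarrow> lc \<Rightarrow> bool" where
  "lc_le x y \<longleftrightarrow> x = y \<or> lc_less x y"

definition lc_lim :: "(nat \<Rightarrow> lc) \<Rightarrow> lc \<Rightarrow> bool" where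
  "lc_lim X L \<longleftrightarrow> (\<forall>a b. lc_less a L \<longrightarrow> lc_less L b \<longrightarrow>
      (\<exists>N. \<forall>n\<ge>N. lc_less a (X n) \<and> lc_less (X n) b))"

fun lc_psum :: "(nat \<Rightarrow> lc) \<Rightarrow> nat \<Rightarrow> lc" where
  "lc_psum f 0 = lc_zero"
| "lc_psum f (Suc n) = lc_add (lc_psum f n) (f n)"

definition lc_sums :: "(nat \<Rightarrow> lc) \<Rightarrow> lc \<Rightarrow> bool" where
  "lc_sums f s \<longleftrightarrow> lc_lim (lc_psum f) s"

definition lc_summable :: "(nat \<Rightarrow> lc) \<Rightarrow> bool" where
  "lc_summable f \<longleftrightarrow> (\<exists>s. lc_sums f s)"

definition lc_suminf :: "(nat \<Rightarrow> lc) \<Rightarrow> lc" where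
  "lc_suminf f = (THE s. lc_sums f s)"

definition lc_interval_ab :: "lc \<Rightarrow> lc \<Rightarrow> lc set \<Rightarrow> bool" where
  "lc_interval_ab a b S \<longleftrightarrow> lc_less a b \<and>
     S \<in> {{x. lc_le a x \<and> lc_le x b}, {x. lc_le a x \<and> lc_less x b},
          {x. lc_less a x \<and> lc_le x b}, {x. lc_less a x \<and> lc_less x b}}"

definition lc_interval :: "lc set \<Rightarrow> bool" where
  "lc_interval S \<longleftrightarrow> (\<exists>a b. lc_interval_ab a b S)"

definition lc_len :: "lc set \<Rightarrow> lc" where
  "lc_len S = (THE l. \<exists>a b. lc_interval_ab a b S \<and> l = lc_sub b a)"

definition lc_cover :: "lc set \<Rightarrow> (nat \<Rightarrow> lc set) \<Rightarrow> bool" where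
  "lc_cover A S \<longleftrightarrow> (\<forall>n. lc_interval (S n)) \<and> A \<subseteq> (\<Union>n. S n)
      \<and> lc_summable (\<lambda>n. lc_len (S n))"

definition lc_is_inf :: "lc set \<Rightarrow> lc \<Rightarrow> bool" where
  "lc_is_inf X m \<longleftrightarrow> (\<forall>x\<in>X. lc_le m x) \<and> (\<forall>m'. (\<forall>x\<in>X. lc_le m' x) \<longrightarrow> lc_le m' m)"

definition lc_cover_sums :: "lc set \<Rightarrow> lc set" where
  "lc_cover_sums A = {s. \<exists>S. lc_cover A S \<and> s = lc_suminf (\<lambda>n. lc_len (S n))}"

definition lc_outer_measurable :: "lc set \<Rightarrow> bool" where
  "lc_outer_measurable A \<longleftrightarrow> (\<exists>m. lc_is_inf (lc_cover_sums A) m)"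

definition lc_Mu :: "lc set \<Rightarrow> lc" where
  "lc_Mu A = (THE m. lc_is_inf (lc_cover_sums A) m)"

end

theory Submission
  imports Defs "HOL-Library.Countable_Set"
begin

text \<open>Summability in the Levi-Civita field is purely combinatorial: a family indexed by any set is
  summable iff for each rational \<open>q\<close> only finitely many members have a nonzero coefficient below
  \<open>q\<close>, and the sum is taken coefficientwise. Hence sums of lengths can be reindexed, regrouped and split
  as for finite sums, and covers can be cut into pieces and reassembled.

  Cutting a cover of \<open>A \<inter> \<Union>J\<^sub>n\<close> along the pairwise disjoint \<open>J\<^sub>n\<close> yields covers of the sets \<open>A \<inter> J\<^sub>n\<close>
  of no larger total length, so \<open>\<Sum> M\<^sub>u(A \<inter> J\<^sub>n)\<close> is a lower bound. Conversely, near-optimal covers of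
  \<open>A \<inter> J\<^sub>n\<close> for \<open>n < N\<close> together with the intervals \<open>J\<^sub>n\<close> for \<open>n \<ge> N\<close> cover \<open>A \<inter> \<Union>J\<^sub>n\<close>, and since
  \<open>l(J\<^sub>n) \<rightarrow> 0\<close> the lengths of the \<open>J\<^sub>n\<close> with \<open>n \<ge> N\<close> have small sum for large \<open>N\<close>. That each
  \<open>A \<inter> J\<^sub>n\<close> is outer measurable follows by cutting near-optimal covers of \<open>A\<close> at the endpoints of
  \<open>J\<^sub>n\<close>: the parts inside \<open>J\<^sub>n\<close> approximate a lower bound of the cover sums of \<open>A \<inter> J\<^sub>n\<close> arbitrarily
  well, and Cauchy completeness turns this into an infimum.\<close>

section \<open>The ordered group of the Levi-Civita field\<close>

definition left_finite :: "(rat \<Rightarrow> real) \<Rightarrow> bool" where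
  "left_finite f \<longleftrightarrow> (\<forall>q. finite {r. r < q \<and> f r \<noteq> 0})"

lemma left_finite_lc_coeff: "left_finite (lc_coeff x)"
  using lc_coeff[of x] by (simp add: left_finite_def)

lemma lc_coeff_Abs: "left_finite f \<Longrightarrow> lc_coeff (Abs_lc f) = f"
  by (simp add: Abs_lc_inverse left_finite_def)

lemma lc_eqI: "(\<And>r. lc_coeff x r = lc_coeff y r) \<Longrightarrow> x = y"
  by (metis ext lc_coeff_inject)

lemma left_finite_add: "left_finite f \<Longrightarrow> left_finite g \<Longrightarrow> left_finite (\<lambda>r. f r + g r)"
  unfolding left_finite_def
proof
  fix q assume "\<forall>q. finite {r. r < q \<and> f r \<noteq> 0}" "\<forall>q. finite {r. r < q \<and> g r \<noteq> 0}"
  then have "finite ({r. r < q \<and> f r \<noteq> 0} \<union> {r. r < q \<and> g r \<noteq> 0})" by auto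
  then show "finite {r. r < q \<and> f r + g r \<noteq> 0}" by (rule finite_subset[rotated]) auto
qed

lemma left_finite_scale: "left_finite f \<Longrightarrow> left_finite (\<lambda>r. c * f r)"
  unfolding left_finite_def
proof
  fix q assume "\<forall>q. finite {r. r < q \<and> f r \<noteq> 0}"
  then have "finite {r. r < q \<and> f r \<noteq> 0}" by auto
  then show "finite {r. r < q \<and> c * f r \<noteq> 0}" by (rule finite_subset[rotated]) auto
qed

lemma lc_coeff_lc_zero [simp]: "lc_coeff lc_zero r = 0"
  by (simp add: lc_zero_def lc_coeff_Abs left_finite_def)

lemma lc_coeff_lc_add [simp]: "lc_coeff (lc_add x y) r = lc_coeff x r + lc_coeff y r"
  by (simp add: lc_add_def lc_coeff_Abs left_finite_add left_finite_lc_coeff)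

lemma lc_coeff_lc_neg [simp]: "lc_coeff (lc_neg x) r = - lc_coeff x r"
  using left_finite_scale[OF left_finite_lc_coeff, of "-1" x]
  by (simp add: lc_neg_def lc_coeff_Abs)

lemma lc_coeff_lc_sub [simp]: "lc_coeff (lc_sub x y) r = lc_coeff x r - lc_coeff y r"
  by (simp add: lc_sub_def)

lemma lc_less_iff_first_difference:
  "lc_less x y \<longleftrightarrow> (\<exists>q. lc_coeff x q < lc_coeff y q \<and> (\<forall>r<q. lc_coeff x r = lc_coeff y r))"
  by (auto simp: lc_less_def lc_pos_def)

lemma lc_first_difference:
  assumes "lc_coeff x r0 \<noteq> lc_coeff y r0"
  shows "\<exists>q. lc_coeff x q \<noteq> lc_coeff y q \<and> (\<forall>r<q. lc_coeff x r = lc_coeff y r)"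
proof -
  let ?D = "{r. r \<le> r0 \<and> lc_coeff x r \<noteq> lc_coeff y r}"
  have "?D \<subseteq> {r. r < r0 + 1 \<and> lc_coeff x r \<noteq> 0} \<union> {r. r < r0 + 1 \<and> lc_coeff y r \<noteq> 0}"
    by auto
  moreover have "finite ({r. r < r0 + 1 \<and> lc_coeff x r \<noteq> 0} \<union> {r. r < r0 + 1 \<and> lc_coeff y r \<noteq> 0})"
    using left_finite_lc_coeff[of x] left_finite_lc_coeff[of y] by (auto simp: left_finite_def)
  ultimately have fin: "finite ?D" by (rule finite_subset)
  have ne: "r0 \<in> ?D" using assms by auto
  define q where "q = Min ?D"
  have "q \<in> ?D" unfolding q_def using fin ne Min_in by blast
  moreover have "\<forall>r<q. lc_coeff x r = lc_coeff y r"
  proof (intro allI impI)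
    fix r assume "r < q"
    show "lc_coeff x r = lc_coeff y r"
    proof (rule ccontr)
      assume "lc_coeff x r \<noteq> lc_coeff y r"
      with \<open>r < q\<close> \<open>q \<in> ?D\<close> have "r \<in> ?D" by auto
      then have "q \<le> r" unfolding q_def using fin by simp
      with \<open>r < q\<close> show False by simp
    qed
  qed
  ultimately show ?thesis by blast
qed

lemma lc_less_irrefl: "\<not> lc_less x x"
  by (auto simp: lc_less_iff_first_difference)

lemma lc_less_trans: "lc_less x y \<Longrightarrow> lc_less y z \<Longrightarrow> lc_less x z"
  unfolding lc_less_iff_first_difference
proof (elim exE conjE)
  fix q1 q2 assume a: "lc_coeff x q1 < lc_coeff y q1" "\<forall>r<q1. lc_coeff x r = lc_coeff y r"
    and b: "lc_coeff y q2 < lc_coeff z q2" "\<forall>r<q2. lc_coeff y r = lc_coeff z r"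
  show "\<exists>q. lc_coeff x q < lc_coeff z q \<and> (\<forall>r<q. lc_coeff x r = lc_coeff z r)"
  proof (cases q1 q2 rule: linorder_cases)
    case less thus ?thesis using a b by (intro exI[of _ q1]) auto
  next
    case equal thus ?thesis using a b by (intro exI[of _ q1]) auto
  next
    case greater thus ?thesis using a b by (intro exI[of _ q2]) auto
  qed
qed

lemma lc_less_asym: "lc_less x y \<Longrightarrow> \<not> lc_less y x"
  using lc_less_trans lc_less_irrefl by blast

lemma lc_less_linear: "x \<noteq> y \<Longrightarrow> lc_less x y \<or> lc_less y x"
proof -
  assume "x \<noteq> y"
  then obtain r0 where "lc_coeff x r0 \<noteq> lc_coeff y r0" using lc_eqI by blast
  from lc_first_difference[OF this] obtain q
    where "lc_coeff x q \<noteq> lc_coeff y q" "\<forall>r<q. lc_coeff x r = lc_coeff y r"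
    by blast
  then show ?thesis
    unfolding lc_less_iff_first_difference by (metis linorder_neqE)
qed

instantiation lc :: linordered_ab_group_add
begin

definition zero_lc_def: "0 = lc_zero"
definition plus_lc_def: "x + y = lc_add x y"
definition uminus_lc_def: "- x = lc_neg x"
definition minus_lc_def: "x - y = lc_sub x y"
definition less_lc_def: "x < y \<longleftrightarrow> lc_less x y"
definition less_eq_lc_def: "x \<le> y \<longleftrightarrow> lc_le x y"

instance
proof
  fix x y z :: lc
  show "(x < y) = (x \<le> y \<and> \<not> y \<le> x)"
    unfolding less_lc_def less_eq_lc_def lc_le_def using lc_less_asym lc_less_irrefl by blast
  show "x \<le> x" by (simp add: less_eq_lc_def lc_le_def)
  show "x \<le> y \<Longrightarrow> y \<le> z \<Longrightarrow> x \<le> z"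
    unfolding less_eq_lc_def lc_le_def using lc_less_trans by blast
  show "x \<le> y \<Longrightarrow> y \<le> x \<Longrightarrow> x = y"
    unfolding less_eq_lc_def lc_le_def using lc_less_asym by blast
  show "x \<le> y \<or> y \<le> x"
    unfolding less_eq_lc_def lc_le_def using lc_less_linear by blast
  show "x + y + z = x + (y + z)" by (rule lc_eqI) (simp add: plus_lc_def)
  show "x + y = y + x" by (rule lc_eqI) (simp add: plus_lc_def)
  show "0 + x = x" by (rule lc_eqI) (simp add: plus_lc_def zero_lc_def)
  show "- x + x = 0" by (rule lc_eqI) (simp add: plus_lc_def zero_lc_def uminus_lc_def)
  show "x - y = x + - y" by (rule lc_eqI) (simp add: plus_lc_def minus_lc_def uminus_lc_def)
  show "x \<le> y \<Longrightarrow> z + x \<le> z + y"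
    unfolding less_eq_lc_def lc_le_def lc_less_iff_first_difference plus_lc_def by auto
qed

end

lemma lc_le_iff_le: "lc_le x y \<longleftrightarrow> x \<le> y"
  by (simp add: less_eq_lc_def)

lemma lc_less_iff_less: "lc_less x y \<longleftrightarrow> x < y"
  by (simp add: less_lc_def)

lemma lc_sub_eq_diff: "lc_sub x y = x - y"
  by (simp add: minus_lc_def)

lemma lc_coeff_add [simp]: "lc_coeff (x + y) r = lc_coeff x r + lc_coeff y r"
  by (simp add: plus_lc_def)

lemma lc_coeff_uminus [simp]: "lc_coeff (- x) r = - lc_coeff x r"
  by (simp add: uminus_lc_def)

lemma lc_coeff_diff [simp]: "lc_coeff (x - y) r = lc_coeff x r - lc_coeff y r"
  by (simp add: minus_lc_def)

lemma lc_coeff_0 [simp]: "lc_coeff 0 r = 0"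
  by (simp add: zero_lc_def)

lemma lc_coeff_sum: "lc_coeff (sum f F) r = (\<Sum>i\<in>F. lc_coeff (f i) r)"
  by (induction F rule: infinite_finite_induct) auto

lemma less_lc_iff: "x < y \<longleftrightarrow> (\<exists>q. lc_coeff x q < lc_coeff y q \<and> (\<forall>r<q. lc_coeff x r = lc_coeff y r))"
  by (simp add: less_lc_def lc_less_iff_first_difference)

lemma zero_less_lc_iff: "0 < x \<longleftrightarrow> (\<exists>q. 0 < lc_coeff x q \<and> (\<forall>r<q. lc_coeff x r = 0))"
  by (simp add: less_lc_iff)

section \<open>Valuation and limits\<close>

definition vanishes_below :: "lc \<Rightarrow> rat \<Rightarrow> bool" where
  "vanishes_below x q \<longleftrightarrow> (\<forall>r<q. lc_coeff x r = 0)"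

lemma vanishes_below_add: "vanishes_below x q \<Longrightarrow> vanishes_below y q \<Longrightarrow> vanishes_below (x + y) q"
  by (simp add: vanishes_below_def)

lemma vanishes_below_diff: "vanishes_below x q \<Longrightarrow> vanishes_below y q \<Longrightarrow> vanishes_below (x - y) q"
  by (simp add: vanishes_below_def)

lemma vanishes_below_0 [simp]: "vanishes_below 0 q"
  by (simp add: vanishes_below_def)

lemma vanishes_below_diff_coeff_eq: "vanishes_below (x - y) q \<Longrightarrow> r < q \<Longrightarrow> lc_coeff x r = lc_coeff y r"
  by (simp add: vanishes_below_def)

lemma eq_0_if_vanishes_below: "(\<And>q. vanishes_below x q) \<Longrightarrow> x = 0"
proof (rule lc_eqI)
  fix r assume "\<And>q. vanishes_below x q"
  then have "vanishes_below x (r + 1)" by blast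
  then show "lc_coeff x r = lc_coeff 0 r" by (simp add: vanishes_below_def)
qed

lemma vanishes_below_mono:
  assumes "0 \<le> x" "x \<le> y" "vanishes_below y q"
  shows "vanishes_below x q"
proof (rule ccontr)
  assume "\<not> vanishes_below x q"
  then obtain r where r: "r < q" "lc_coeff x r \<noteq> 0" by (auto simp: vanishes_below_def)
  then have "x \<noteq> 0" by auto
  with assms have "0 < x" by auto
  then obtain q0 where q0: "0 < lc_coeff x q0" "\<forall>r<q0. lc_coeff x r = 0"
    by (auto simp: zero_less_lc_iff)
  have "q0 \<le> r" using q0(2) r(2) by (meson not_le)
  then have "q0 < q" using r by simp
  then have "y < x" unfolding less_lc_iff using q0 assms(3)
    by (intro exI[of _ q0]) (auto simp: vanishes_below_def)
  with assms show False by simp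
qed

text \<open>The order topology is the valuation topology: every positive element dominates all elements
  vanishing below some rational.\<close>

lemma vanishes_below_bounded:
  assumes "0 < e"
  shows "\<exists>q. \<forall>x. vanishes_below x q \<longrightarrow> x < e \<and> - e < x"
proof -
  obtain q0 where q0: "0 < lc_coeff e q0" "\<forall>r<q0. lc_coeff e r = 0"
    using assms by (auto simp: zero_less_lc_iff)
  show ?thesis
  proof (intro exI[of _ "q0 + 1"] allI impI conjI)
    fix x assume x: "vanishes_below x (q0 + 1)"
    show "x < e" unfolding less_lc_iff using q0 x
      by (intro exI[of _ q0]) (auto simp: vanishes_below_def)
    show "- e < x" unfolding less_lc_iff using q0 x
      by (intro exI[of _ q0]) (auto simp: vanishes_below_def)
  qed
qed

definition lc_monom :: "rat \<Rightarrow> lc" where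
  "lc_monom q = Abs_lc (\<lambda>r. if r = q then 1 else 0)"

lemma lc_coeff_monom: "lc_coeff (lc_monom q) r = (if r = q then 1 else 0)"
  unfolding lc_monom_def
  by (subst lc_coeff_Abs) (auto simp: left_finite_def intro: finite_subset[of _ "{q}"])

lemma lc_monom_pos: "0 < lc_monom q"
  unfolding zero_less_lc_iff by (intro exI[of _ q]) (simp add: lc_coeff_monom)

lemma lc_monom_strict_antimono: "q < q' \<Longrightarrow> lc_monom q' < lc_monom q"
  unfolding less_lc_iff by (intro exI[of _ q]) (auto simp: lc_coeff_monom)

lemma vanishes_below_if_bounded:
  assumes "- lc_monom q < y" "y < lc_monom q"
  shows "vanishes_below y q"
proof (rule ccontr)
  assume "\<not> vanishes_below y q"
  then obtain r where r: "r < q" "lc_coeff y r \<noteq> lc_coeff 0 r" by (auto simp: vanishes_below_def)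
  from lc_first_difference[OF r(2)] obtain q1
    where q1: "lc_coeff y q1 \<noteq> 0" "\<forall>r<q1. lc_coeff y r = 0" by auto
  have "q1 \<le> r" using q1(2) r(2) by (metis lc_coeff_0 not_le)
  then have "q1 < q" using r by simp
  show False
  proof (cases "0 < lc_coeff y q1")
    case True
    then have "lc_monom q < y" unfolding less_lc_iff using q1 \<open>q1 < q\<close>
      by (intro exI[of _ q1]) (auto simp: lc_coeff_monom)
    with assms show False by simp
  next
    case False
    then have "y < - lc_monom q" unfolding less_lc_iff using q1 \<open>q1 < q\<close>
      by (intro exI[of _ q1]) (auto simp: lc_coeff_monom)
    with assms show False by simp
  qed
qed

definition lc_half :: "lc \<Rightarrow> lc" where
  "lc_half x = Abs_lc (\<lambda>r. lc_coeff x r / 2)"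

lemma lc_coeff_half: "lc_coeff (lc_half x) r = lc_coeff x r / 2"
  using left_finite_scale[OF left_finite_lc_coeff, of "1/2" x] by (simp add: lc_half_def lc_coeff_Abs)

lemma lc_half_add_half: "lc_half x + lc_half x = x"
  by (rule lc_eqI) (simp add: lc_coeff_half)

lemma lc_half_pos: "0 < x \<Longrightarrow> 0 < lc_half x"
  unfolding zero_less_lc_iff by (auto simp: lc_coeff_half)

lemma lc_dense: "a < (b::lc) \<Longrightarrow> \<exists>z. a < z \<and> z < b"
proof -
  assume "a < b"
  then have h: "0 < lc_half (b - a)" using lc_half_pos by simp
  have "a + lc_half (b - a) < a + lc_half (b - a) + lc_half (b - a)" using h by simp
  also have "\<dots> = b" by (simp add: add.assoc lc_half_add_half)
  finally show ?thesis using h by (intro exI[of _ "a + lc_half (b - a)"]) simp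
qed

lemma lc_lim_iff: "lc_lim X L \<longleftrightarrow> (\<forall>q. \<exists>N. \<forall>n\<ge>N. vanishes_below (X n - L) q)"
proof
  assume lim: "lc_lim X L"
  show "\<forall>q. \<exists>N. \<forall>n\<ge>N. vanishes_below (X n - L) q"
  proof
    fix q
    have "lc_less (L - lc_monom q) L" "lc_less L (L + lc_monom q)"
      using lc_monom_pos[of q] by (auto simp: lc_less_iff_less)
    with lim obtain N where N: "\<forall>n\<ge>N. lc_less (L - lc_monom q) (X n) \<and> lc_less (X n) (L + lc_monom q)"
      unfolding lc_lim_def by blast
    show "\<exists>N. \<forall>n\<ge>N. vanishes_below (X n - L) q"
    proof (intro exI allI impI)
      fix n assume "N \<le> n"
      with N have "L - lc_monom q < X n" "X n < L + lc_monom q" by (auto simp: lc_less_iff_less)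
      then show "vanishes_below (X n - L) q"
        by (intro vanishes_below_if_bounded) (auto simp: algebra_simps)
    qed
  qed
next
  assume van: "\<forall>q. \<exists>N. \<forall>n\<ge>N. vanishes_below (X n - L) q"
  show "lc_lim X L" unfolding lc_lim_def lc_less_iff_less
  proof (intro allI impI)
    fix u v assume uv: "u < L" "L < v"
    define e where "e = min (L - u) (v - L)"
    have "0 < e" using uv by (simp add: e_def)
    from vanishes_below_bounded[OF this] obtain q
      where q: "\<forall>x. vanishes_below x q \<longrightarrow> x < e \<and> - e < x" by blast
    from van obtain N where N: "\<forall>n\<ge>N. vanishes_below (X n - L) q" by blast
    show "\<exists>N. \<forall>n\<ge>N. u < X n \<and> X n < v"
    proof (intro exI allI impI)
      fix n assume "N \<le> n"
      with N q have "X n - L < e" "- e < X n - L" by auto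
      moreover have "e \<le> L - u" "e \<le> v - L" by (simp_all add: e_def)
      ultimately have "X n - L < v - L" "- (L - u) < X n - L"
        using less_le_trans[of "X n - L" e "v - L"] le_less_trans[of "- (L - u)" "- e" "X n - L"]
          neg_le_iff_le[of e "L - u"] by auto
      then show "u < X n \<and> X n < v" by (simp add: algebra_simps)
    qed
  qed
qed

lemma lc_lim_unique: "lc_lim X L \<Longrightarrow> lc_lim X L' \<Longrightarrow> L = L'"
proof -
  assume lims: "lc_lim X L" "lc_lim X L'"
  have "vanishes_below (L' - L) q" for q
  proof -
    obtain N1 where "\<forall>n\<ge>N1. vanishes_below (X n - L) q" using lims lc_lim_iff by blast
    moreover obtain N2 where "\<forall>n\<ge>N2. vanishes_below (X n - L') q" using lims lc_lim_iff by blast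
    ultimately have "vanishes_below (X (max N1 N2) - L) q" "vanishes_below (X (max N1 N2) - L') q"
      by auto
    from vanishes_below_diff[OF this] show ?thesis by simp
  qed
  then have "L' - L = 0" by (rule eq_0_if_vanishes_below)
  then show ?thesis by simp
qed

lemma lc_lim_le: "lc_lim X L \<Longrightarrow> (\<And>n. X n \<le> B) \<Longrightarrow> L \<le> B"
proof (rule ccontr)
  assume a: "lc_lim X L" "\<And>n. X n \<le> B" "\<not> L \<le> B"
  then have "0 < L - B" by simp
  from vanishes_below_bounded[OF this] obtain q
    where q: "\<forall>x. vanishes_below x q \<longrightarrow> - (L - B) < x" by blast
  obtain N where "\<forall>n\<ge>N. vanishes_below (X n - L) q" using a lc_lim_iff by blast
  then have "- (L - B) < X N - L" using q by auto
  with a(2)[of N] show False by (simp add: algebra_simps)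
qed

lemma lc_lim_ge: "lc_lim X L \<Longrightarrow> (\<And>n. B \<le> X n) \<Longrightarrow> B \<le> L"
proof (rule ccontr)
  assume a: "lc_lim X L" "\<And>n. B \<le> X n" "\<not> B \<le> L"
  then have "0 < B - L" by simp
  from vanishes_below_bounded[OF this] obtain q
    where q: "\<forall>x. vanishes_below x q \<longrightarrow> x < B - L" by blast
  obtain N where "\<forall>n\<ge>N. vanishes_below (X n - L) q" using a lc_lim_iff by blast
  then have "X N - L < B - L" using q by auto
  with a(2)[of N] show False by (simp add: algebra_simps)
qed

section \<open>Sums over arbitrary index sets\<close>

definition lc_summable_on :: "'i set \<Rightarrow> ('i \<Rightarrow> lc) \<Rightarrow> bool" where
  "lc_summable_on I a \<longleftrightarrow> (\<forall>q. finite {i\<in>I. \<not> vanishes_below (a i) q})"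

definition lc_sum_on :: "'i set \<Rightarrow> ('i \<Rightarrow> lc) \<Rightarrow> lc" where
  "lc_sum_on I a = Abs_lc (\<lambda>r. \<Sum>i\<in>{i\<in>I. lc_coeff (a i) r \<noteq> 0}. lc_coeff (a i) r)"

lemma lc_summable_on_finite_support: "lc_summable_on I a \<Longrightarrow> finite {i\<in>I. lc_coeff (a i) r \<noteq> 0}"
proof -
  assume "lc_summable_on I a"
  then have "finite {i\<in>I. \<not> vanishes_below (a i) (r + 1)}" by (simp add: lc_summable_on_def)
  then show ?thesis by (rule finite_subset[rotated]) (auto simp: vanishes_below_def intro!: exI[of _ r])
qed

lemma left_finite_sum_on: "lc_summable_on I a \<Longrightarrow> left_finite (\<lambda>r. \<Sum>i\<in>{i\<in>I. lc_coeff (a i) r \<noteq> 0}. lc_coeff (a i) r)"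
  unfolding left_finite_def
proof
  fix q assume fs: "lc_summable_on I a"
  let ?F = "{i\<in>I. \<not> vanishes_below (a i) q}"
  have finF: "finite ?F" using fs by (simp add: lc_summable_on_def)
  have "{r. r < q \<and> (\<Sum>i\<in>{i\<in>I. lc_coeff (a i) r \<noteq> 0}. lc_coeff (a i) r) \<noteq> 0}
        \<subseteq> (\<Union>i\<in>?F. {r. r < q \<and> lc_coeff (a i) r \<noteq> 0})"
  proof
    fix r assume "r \<in> {r. r < q \<and> (\<Sum>i\<in>{i\<in>I. lc_coeff (a i) r \<noteq> 0}. lc_coeff (a i) r) \<noteq> 0}"
    then have r: "r < q" "(\<Sum>i\<in>{i\<in>I. lc_coeff (a i) r \<noteq> 0}. lc_coeff (a i) r) \<noteq> 0" by auto
    have "\<exists>i. i \<in> I \<and> lc_coeff (a i) r \<noteq> 0"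
    proof (rule ccontr)
      assume "\<not> (\<exists>i. i \<in> I \<and> lc_coeff (a i) r \<noteq> 0)"
      then have "{i\<in>I. lc_coeff (a i) r \<noteq> 0} = {}" by auto
      with r show False by simp
    qed
    then obtain i where "i \<in> I" "lc_coeff (a i) r \<noteq> 0" by blast
    then show "r \<in> (\<Union>i\<in>?F. {r. r < q \<and> lc_coeff (a i) r \<noteq> 0})"
      using r by (auto simp: vanishes_below_def)
  qed
  moreover have "finite (\<Union>i\<in>?F. {r. r < q \<and> lc_coeff (a i) r \<noteq> 0})"
    using finF left_finite_lc_coeff by (auto simp: left_finite_def)
  ultimately show "finite {r. r < q \<and> (\<Sum>i\<in>{i\<in>I. lc_coeff (a i) r \<noteq> 0}. lc_coeff (a i) r) \<noteq> 0}"
    by (rule finite_subset)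
qed

lemma lc_coeff_sum_on: "lc_summable_on I a \<Longrightarrow> lc_coeff (lc_sum_on I a) r = (\<Sum>i\<in>{i\<in>I. lc_coeff (a i) r \<noteq> 0}. lc_coeff (a i) r)"
  unfolding lc_sum_on_def by (subst lc_coeff_Abs[OF left_finite_sum_on]) auto

lemma lc_coeff_sum_on_eq_sum:
  assumes "lc_summable_on I a" "finite F" "F \<subseteq> I" "\<And>i. i \<in> I - F \<Longrightarrow> lc_coeff (a i) r = 0"
  shows "lc_coeff (lc_sum_on I a) r = (\<Sum>i\<in>F. lc_coeff (a i) r)"
  unfolding lc_coeff_sum_on[OF assms(1)]
  by (rule sum.mono_neutral_left) (use assms in auto)

lemma lc_coeff_sum_on_truncate:
  assumes "lc_summable_on I a" "finite F" "F \<subseteq> I" "{i\<in>I. \<not> vanishes_below (a i) q} \<subseteq> F" "r < q"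
  shows "lc_coeff (lc_sum_on I a) r = lc_coeff (sum a F) r"
  unfolding lc_coeff_sum
  by (rule lc_coeff_sum_on_eq_sum) (use assms in \<open>auto simp: vanishes_below_def\<close>)

lemma lc_summable_on_finite: "finite I \<Longrightarrow> lc_summable_on I a"
  by (simp add: lc_summable_on_def)

lemma lc_summable_on_subset: "lc_summable_on I a \<Longrightarrow> J \<subseteq> I \<Longrightarrow> lc_summable_on J a"
  unfolding lc_summable_on_def
proof
  fix q assume "\<forall>q. finite {i \<in> I. \<not> vanishes_below (a i) q}" "J \<subseteq> I"
  then have "finite {i \<in> I. \<not> vanishes_below (a i) q}" by blast
  then show "finite {i \<in> J. \<not> vanishes_below (a i) q}" by (rule finite_subset[rotated]) (use \<open>J \<subseteq> I\<close> in auto)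
qed

lemma lc_sum_on_cong: "(\<And>i. i \<in> I \<Longrightarrow> a i = b i) \<Longrightarrow> lc_sum_on I a = lc_sum_on I b"
proof -
  assume a: "\<And>i. i \<in> I \<Longrightarrow> a i = b i"
  have "(\<lambda>r. \<Sum>i\<in>{i\<in>I. lc_coeff (a i) r \<noteq> 0}. lc_coeff (a i) r) = (\<lambda>r. \<Sum>i\<in>{i\<in>I. lc_coeff (b i) r \<noteq> 0}. lc_coeff (b i) r)"
  proof
    fix r
    have "{i\<in>I. lc_coeff (a i) r \<noteq> 0} = {i\<in>I. lc_coeff (b i) r \<noteq> 0}" using a by auto
    then show "(\<Sum>i\<in>{i\<in>I. lc_coeff (a i) r \<noteq> 0}. lc_coeff (a i) r) = (\<Sum>i\<in>{i\<in>I. lc_coeff (b i) r \<noteq> 0}. lc_coeff (b i) r)"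
      using a by (intro sum.cong) auto
  qed
  then show ?thesis by (simp add: lc_sum_on_def)
qed

lemma lc_sum_on_finite_support:
  assumes "finite F" "F \<subseteq> I" "\<And>i. i \<in> I - F \<Longrightarrow> a i = 0"
  shows "lc_summable_on I a" "lc_sum_on I a = sum a F"
proof -
  have "{i \<in> I. \<not> vanishes_below (a i) q} \<subseteq> F" for q
    using assms(3) by fastforce
  then show fs: "lc_summable_on I a"
    unfolding lc_summable_on_def using assms(1) finite_subset by blast
  show "lc_sum_on I a = sum a F"
    by (rule lc_eqI, subst lc_coeff_sum_on_eq_sum[OF fs assms(1,2)]) (use assms in \<open>auto simp: lc_coeff_sum\<close>)
qed

lemma lc_sum_on_finite: "finite I \<Longrightarrow> lc_sum_on I a = sum a I"
  using lc_sum_on_finite_support[of I I a] by auto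

lemma lc_sum_on_zero: "lc_sum_on I (\<lambda>_. 0) = 0"
  using lc_sum_on_finite_support[of "{}" I "\<lambda>_. 0"] by simp

lemma lc_sum_on_mono:
  assumes fa: "lc_summable_on I a" and fb: "lc_summable_on I b" and le: "\<And>i. i \<in> I \<Longrightarrow> a i \<le> b i"
  shows "lc_sum_on I a \<le> lc_sum_on I b"
proof (rule ccontr)
  assume "\<not> lc_sum_on I a \<le> lc_sum_on I b"
  then have "lc_sum_on I b < lc_sum_on I a" by simp
  then obtain q where q: "lc_coeff (lc_sum_on I b) q < lc_coeff (lc_sum_on I a) q"
    "\<forall>r<q. lc_coeff (lc_sum_on I b) r = lc_coeff (lc_sum_on I a) r" by (auto simp: less_lc_iff)
  define F where "F = {i\<in>I. \<not> vanishes_below (a i) (q+1)} \<union> {i\<in>I. \<not> vanishes_below (b i) (q+1)}"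
  have finF: "finite F" "F \<subseteq> I" using fa fb by (auto simp: F_def lc_summable_on_def)
  have ea: "lc_coeff (lc_sum_on I a) r = lc_coeff (sum a F) r" if "r < q + 1" for r
    by (rule lc_coeff_sum_on_truncate[OF fa finF]) (use that in \<open>auto simp: F_def\<close>)
  have eb: "lc_coeff (lc_sum_on I b) r = lc_coeff (sum b F) r" if "r < q + 1" for r
    by (rule lc_coeff_sum_on_truncate[OF fb finF]) (use that in \<open>auto simp: F_def\<close>)
  have "sum b F < sum a F" unfolding less_lc_iff
    using q ea eb by (intro exI[of _ q]) auto
  moreover have "sum a F \<le> sum b F" using le finF by (intro sum_mono) auto
  ultimately show False by simp
qed

lemma lc_sum_on_nonneg: "lc_summable_on I a \<Longrightarrow> (\<And>i. i \<in> I \<Longrightarrow> 0 \<le> a i) \<Longrightarrow> 0 \<le> lc_sum_on I a"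
  using lc_sum_on_mono[of I "\<lambda>_. 0" a] lc_sum_on_zero[of I] lc_summable_on_finite[of "{}"] lc_sum_on_finite_support(1)[of "{}" I "\<lambda>_. 0"]
  by auto

lemma lc_summable_on_add: "lc_summable_on I a \<Longrightarrow> lc_summable_on I b \<Longrightarrow> lc_summable_on I (\<lambda>i. a i + b i)"
  unfolding lc_summable_on_def
proof
  fix q assume "\<forall>q. finite {i \<in> I. \<not> vanishes_below (a i) q}" "\<forall>q. finite {i \<in> I. \<not> vanishes_below (b i) q}"
  then have "finite ({i \<in> I. \<not> vanishes_below (a i) q} \<union> {i \<in> I. \<not> vanishes_below (b i) q})" by auto
  then show "finite {i \<in> I. \<not> vanishes_below (a i + b i) q}"
    by (rule finite_subset[rotated]) (auto dest: vanishes_below_add)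
qed

lemma lc_sum_on_add:
  assumes fa: "lc_summable_on I a" and fb: "lc_summable_on I b"
  shows "lc_sum_on I (\<lambda>i. a i + b i) = lc_sum_on I a + lc_sum_on I b"
proof (rule lc_eqI)
  fix r
  define F where "F = {i\<in>I. lc_coeff (a i) r \<noteq> 0} \<union> {i\<in>I. lc_coeff (b i) r \<noteq> 0}"
  have finF: "finite F" "F \<subseteq> I" using lc_summable_on_finite_support[OF fa] lc_summable_on_finite_support[OF fb] by (auto simp: F_def)
  have "lc_coeff (lc_sum_on I (\<lambda>i. a i + b i)) r = (\<Sum>i\<in>F. lc_coeff (a i + b i) r)"
    by (rule lc_coeff_sum_on_eq_sum[OF lc_summable_on_add[OF fa fb] finF]) (simp add: F_def)
  also have "\<dots> = (\<Sum>i\<in>F. lc_coeff (a i) r) + (\<Sum>i\<in>F. lc_coeff (b i) r)"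
    by (simp add: sum.distrib)
  also have "\<dots> = lc_coeff (lc_sum_on I a + lc_sum_on I b) r"
    using lc_coeff_sum_on_eq_sum[OF fa finF, of r] lc_coeff_sum_on_eq_sum[OF fb finF, of r]
    by (simp add: F_def)
  finally show "lc_coeff (lc_sum_on I (\<lambda>i. a i + b i)) r = lc_coeff (lc_sum_on I a + lc_sum_on I b) r" .
qed

lemma lc_summable_on_sum: "finite K \<Longrightarrow> (\<And>k. k \<in> K \<Longrightarrow> lc_summable_on I (a k)) \<Longrightarrow> lc_summable_on I (\<lambda>i. \<Sum>k\<in>K. a k i)"
proof (induction K rule: finite_induct)
  case empty thus ?case using lc_sum_on_finite_support(1)[of "{}" I "\<lambda>_. 0"] by simp
next
  case (insert k K) thus ?case by (simp add: lc_summable_on_add)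
qed

lemma lc_sum_on_sum: "finite K \<Longrightarrow> (\<And>k. k \<in> K \<Longrightarrow> lc_summable_on I (a k)) \<Longrightarrow> lc_sum_on I (\<lambda>i. \<Sum>k\<in>K. a k i) = (\<Sum>k\<in>K. lc_sum_on I (a k))"
proof (induction K rule: finite_induct)
  case empty thus ?case by (simp add: lc_sum_on_zero)
next
  case (insert k K) thus ?case by (simp add: lc_sum_on_add lc_summable_on_sum)
qed

lemma lc_summable_on_Un: "lc_summable_on I a \<Longrightarrow> lc_summable_on J a \<Longrightarrow> lc_summable_on (I \<union> J) a"
  unfolding lc_summable_on_def
proof
  fix q assume "\<forall>q. finite {i \<in> I. \<not> vanishes_below (a i) q}" "\<forall>q. finite {i \<in> J. \<not> vanishes_below (a i) q}"
  then have "finite ({i \<in> I. \<not> vanishes_below (a i) q} \<union> {i \<in> J. \<not> vanishes_below (a i) q})" by auto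
  then show "finite {i \<in> I \<union> J. \<not> vanishes_below (a i) q}" by (rule finite_subset[rotated]) auto
qed

lemma lc_summable_on_cong:
  "lc_summable_on I a \<Longrightarrow> (\<And>i. i \<in> I \<Longrightarrow> a i = b i) \<Longrightarrow> lc_summable_on I b"
  unfolding lc_summable_on_def by (metis (mono_tags, lifting) Collect_cong)

lemma lc_sum_on_Un:
  assumes fs: "lc_summable_on (I \<union> J) a" and dj: "I \<inter> J = {}"
  shows "lc_sum_on (I \<union> J) a = lc_sum_on I a + lc_sum_on J a"
proof (rule lc_eqI)
  fix r
  have fI: "lc_summable_on I a" and fJ: "lc_summable_on J a" using fs lc_summable_on_subset by blast+
  define F where "F = {i\<in>I \<union> J. lc_coeff (a i) r \<noteq> 0}"
  have finF: "finite F" using lc_summable_on_finite_support[OF fs] by (simp add: F_def)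
  have "lc_coeff (lc_sum_on (I \<union> J) a) r = (\<Sum>i\<in>F. lc_coeff (a i) r)"
    by (rule lc_coeff_sum_on_eq_sum[OF fs finF]) (auto simp: F_def)
  also have "\<dots> = (\<Sum>i\<in>F \<inter> I. lc_coeff (a i) r) + (\<Sum>i\<in>F \<inter> J. lc_coeff (a i) r)"
  proof -
    have "F = (F \<inter> I) \<union> (F \<inter> J)" by (auto simp: F_def)
    then show ?thesis using sum.union_disjoint[of "F \<inter> I" "F \<inter> J" "\<lambda>i. lc_coeff (a i) r"] finF dj
      by auto
  qed
  also have "(\<Sum>i\<in>F \<inter> I. lc_coeff (a i) r) = lc_coeff (lc_sum_on I a) r"
    by (rule lc_coeff_sum_on_eq_sum[OF fI, symmetric]) (use finF in \<open>auto simp: F_def\<close>)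
  also have "(\<Sum>i\<in>F \<inter> J. lc_coeff (a i) r) = lc_coeff (lc_sum_on J a) r"
    by (rule lc_coeff_sum_on_eq_sum[OF fJ, symmetric]) (use finF in \<open>auto simp: F_def\<close>)
  finally show "lc_coeff (lc_sum_on (I \<union> J) a) r = lc_coeff (lc_sum_on I a + lc_sum_on J a) r" by simp
qed

lemma lc_sum_on_ge_sum:
  assumes "lc_summable_on I f" "\<And>i. i \<in> I \<Longrightarrow> 0 \<le> f i" "finite F" "F \<subseteq> I"
  shows "sum f F \<le> lc_sum_on I f"
proof -
  have I: "F \<union> (I - F) = I" using assms(4) by auto
  then have "lc_sum_on I f = sum f F + lc_sum_on (I - F) f"
    using lc_sum_on_Un[of F "I - F" f] assms(1,3) by (simp add: lc_sum_on_finite)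
  moreover have "0 \<le> lc_sum_on (I - F) f"
    using lc_sum_on_nonneg[OF lc_summable_on_subset[OF assms(1)], of "I - F"] assms(2) by blast
  ultimately show ?thesis by simp
qed

lemma lc_sum_on_split_at:
  fixes f :: "nat \<Rightarrow> lc"
  assumes "lc_summable_on UNIV f"
  shows "lc_sum_on UNIV f = sum f {..<N} + lc_sum_on {N..} f"
proof -
  have un: "{..<N} \<union> {N..} = (UNIV :: nat set)" by auto
  have "lc_sum_on ({..<N} \<union> {N..}) f = lc_sum_on {..<N} f + lc_sum_on {N..} f"
    by (rule lc_sum_on_Un) (use assms un in auto)
  then show ?thesis by (simp add: un lc_sum_on_finite)
qed

lemma lc_summable_on_dominated:
  assumes "lc_summable_on I b" "\<And>i. i \<in> I \<Longrightarrow> 0 \<le> a i" "\<And>i. i \<in> I \<Longrightarrow> a i \<le> b i"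
  shows "lc_summable_on I a"
  unfolding lc_summable_on_def
proof
  fix q
  have "{i \<in> I. \<not> vanishes_below (a i) q} \<subseteq> {i \<in> I. \<not> vanishes_below (b i) q}"
    using assms(2,3) vanishes_below_mono by blast
  moreover have "finite {i \<in> I. \<not> vanishes_below (b i) q}"
    using assms(1) by (simp add: lc_summable_on_def)
  ultimately show "finite {i \<in> I. \<not> vanishes_below (a i) q}" by (rule finite_subset)
qed

lemma lc_summable_on_reindex:
  assumes bij: "bij_betw g J I" and fs: "lc_summable_on I a"
  shows "lc_summable_on J (a \<circ> g)"
  unfolding lc_summable_on_def
proof
  fix q
  have "inj_on g {j\<in>J. \<not> vanishes_below (a (g j)) q}" using bij by (auto simp: bij_betw_def inj_on_def)
  moreover have "g ` {j\<in>J. \<not> vanishes_below (a (g j)) q} \<subseteq> {i\<in>I. \<not> vanishes_below (a i) q}"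
    using bij by (auto simp: bij_betw_def)
  moreover have "finite {i\<in>I. \<not> vanishes_below (a i) q}" using fs by (simp add: lc_summable_on_def)
  ultimately have "finite {j\<in>J. \<not> vanishes_below (a (g j)) q}"
    using finite_imageD finite_subset by blast
  then show "finite {j \<in> J. \<not> vanishes_below ((a \<circ> g) j) q}" by simp
qed

lemma lc_sum_on_reindex:
  assumes bij: "bij_betw g J I" and fs: "lc_summable_on I a"
  shows "lc_sum_on J (a \<circ> g) = lc_sum_on I a"
proof (rule lc_eqI)
  fix r
  have fJ: "lc_summable_on J (a \<circ> g)" by (rule lc_summable_on_reindex[OF bij fs])
  define FJ where "FJ = {j\<in>J. lc_coeff (a (g j)) r \<noteq> 0}"
  define FI where "FI = {i\<in>I. lc_coeff (a i) r \<noteq> 0}"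
  have b2: "bij_betw g FJ FI"
    using bij unfolding FJ_def FI_def bij_betw_def inj_on_def by (auto simp: image_iff)
  have "lc_coeff (lc_sum_on J (a \<circ> g)) r = (\<Sum>j\<in>FJ. lc_coeff (a (g j)) r)"
    using lc_coeff_sum_on[OF fJ] by (simp add: FJ_def)
  also have "\<dots> = (\<Sum>i\<in>FI. lc_coeff (a i) r)" by (rule sum.reindex_bij_betw[OF b2])
  also have "\<dots> = lc_coeff (lc_sum_on I a) r" using lc_coeff_sum_on[OF fs] by (simp add: FI_def)
  finally show "lc_coeff (lc_sum_on J (a \<circ> g)) r = lc_coeff (lc_sum_on I a) r" .
qed

lemma vanishes_below_sum_on: "lc_summable_on I a \<Longrightarrow> (\<And>i. i \<in> I \<Longrightarrow> vanishes_below (a i) q) \<Longrightarrow> vanishes_below (lc_sum_on I a) q"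
  unfolding vanishes_below_def by (subst lc_coeff_sum_on) auto

lemma lc_summable_on_Sigma_row:
  assumes fs: "lc_summable_on (Sigma I K) a" and i: "i \<in> I"
  shows "lc_summable_on (K i) (\<lambda>k. a (i, k))"
  unfolding lc_summable_on_def
proof
  fix q
  have "{k \<in> K i. \<not> vanishes_below (a (i, k)) q} \<subseteq> snd ` {p \<in> Sigma I K. \<not> vanishes_below (a p) q}"
    using i by (auto simp: image_iff)
  moreover have "finite {p \<in> Sigma I K. \<not> vanishes_below (a p) q}" using fs by (simp add: lc_summable_on_def)
  ultimately show "finite {k \<in> K i. \<not> vanishes_below (a (i, k)) q}" by (meson finite_imageI finite_subset)
qed

lemma lc_summable_on_row_sums:
  assumes fs: "lc_summable_on (Sigma I K) a"
  shows "lc_summable_on I (\<lambda>i. lc_sum_on (K i) (\<lambda>k. a (i, k)))"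
  unfolding lc_summable_on_def
proof
  fix q
  have "{i \<in> I. \<not> vanishes_below (lc_sum_on (K i) (\<lambda>k. a (i, k))) q} \<subseteq> fst ` {p \<in> Sigma I K. \<not> vanishes_below (a p) q}"
  proof
    fix i assume "i \<in> {i \<in> I. \<not> vanishes_below (lc_sum_on (K i) (\<lambda>k. a (i, k))) q}"
    then have i: "i \<in> I" "\<not> vanishes_below (lc_sum_on (K i) (\<lambda>k. a (i, k))) q" by auto
    have "\<exists>k\<in>K i. \<not> vanishes_below (a (i, k)) q"
      using i vanishes_below_sum_on[OF lc_summable_on_Sigma_row[OF fs i(1)]] by blast
    then show "i \<in> fst ` {p \<in> Sigma I K. \<not> vanishes_below (a p) q}" using i by (force simp: image_iff)
  qed
  moreover have "finite {p \<in> Sigma I K. \<not> vanishes_below (a p) q}" using fs by (simp add: lc_summable_on_def)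
  ultimately show "finite {i \<in> I. \<not> vanishes_below (lc_sum_on (K i) (\<lambda>k. a (i, k))) q}" by (meson finite_imageI finite_subset)
qed

lemma lc_sum_on_Sigma:
  assumes fs: "lc_summable_on (Sigma I K) a"
  shows "lc_sum_on (Sigma I K) a = lc_sum_on I (\<lambda>i. lc_sum_on (K i) (\<lambda>k. a (i, k)))"
proof (rule lc_eqI)
  fix r
  define P where "P = {p \<in> Sigma I K. lc_coeff (a p) r \<noteq> 0}"
  define G where "G = fst ` P"
  have finP: "finite P" using lc_summable_on_finite_support[OF fs] by (simp add: P_def)
  have finG: "finite G" "G \<subseteq> I" using finP by (auto simp: G_def P_def)
  have inner: "lc_coeff (lc_sum_on (K i) (\<lambda>k. a (i, k))) r = (\<Sum>k\<in>{k\<in>K i. lc_coeff (a (i, k)) r \<noteq> 0}. lc_coeff (a (i, k)) r)"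
    if "i \<in> I" for i using lc_coeff_sum_on[OF lc_summable_on_Sigma_row[OF fs that]] by simp
  have "lc_coeff (lc_sum_on I (\<lambda>i. lc_sum_on (K i) (\<lambda>k. a (i, k)))) r
      = (\<Sum>i\<in>G. lc_coeff (lc_sum_on (K i) (\<lambda>k. a (i, k))) r)"
  proof (rule lc_coeff_sum_on_eq_sum[OF lc_summable_on_row_sums[OF fs] finG])
    fix i assume "i \<in> I - G"
    then have "{k\<in>K i. lc_coeff (a (i, k)) r \<noteq> 0} = {}" by (force simp: G_def P_def image_iff)
    then show "lc_coeff (lc_sum_on (K i) (\<lambda>k. a (i, k))) r = 0" using inner \<open>i \<in> I - G\<close> by simp
  qed
  also have "\<dots> = (\<Sum>i\<in>G. \<Sum>k\<in>{k\<in>K i. lc_coeff (a (i, k)) r \<noteq> 0}. lc_coeff (a (i, k)) r)"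
    using finG inner by (intro sum.cong) auto
  also have "\<dots> = (\<Sum>p\<in>Sigma G (\<lambda>i. {k\<in>K i. lc_coeff (a (i, k)) r \<noteq> 0}). lc_coeff (a p) r)"
  proof (subst sum.Sigma)
    show "finite G" by fact
    show "\<forall>i\<in>G. finite {k \<in> K i. lc_coeff (a (i, k)) r \<noteq> 0}"
      using finG lc_summable_on_finite_support[OF lc_summable_on_Sigma_row[OF fs]] by auto
  qed (simp add: case_prod_beta)
  also have "Sigma G (\<lambda>i. {k\<in>K i. lc_coeff (a (i, k)) r \<noteq> 0}) = P"
    by (force simp: G_def P_def image_iff)
  also have "(\<Sum>p\<in>P. lc_coeff (a p) r) = lc_coeff (lc_sum_on (Sigma I K) a) r"
    using lc_coeff_sum_on[OF fs] by (simp add: P_def)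
  finally show "lc_coeff (lc_sum_on (Sigma I K) a) r = lc_coeff (lc_sum_on I (\<lambda>i. lc_sum_on (K i) (\<lambda>k. a (i, k)))) r" by simp
qed

lemma lc_sum_on_tail_less:
  fixes f :: "nat \<Rightarrow> lc"
  assumes "lc_summable_on UNIV f" "0 < e"
  obtains N where "lc_sum_on {N..} f < e"
proof -
  from vanishes_below_bounded[OF assms(2)] obtain q
    where q: "\<forall>z. vanishes_below z q \<longrightarrow> z < e \<and> - e < z" by blast
  have "finite {n. \<not> vanishes_below (f n) q}" using assms(1) by (simp add: lc_summable_on_def)
  then obtain N where N: "{n. \<not> vanishes_below (f n) q} \<subseteq> {..<N}"
    using finite_nat_bounded by blast
  have "vanishes_below (f n) q" if "n \<in> {N..}" for n
    using N that by (auto simp: subset_iff not_less[symmetric])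
  then have "vanishes_below (lc_sum_on {N..} f) q"
    using vanishes_below_sum_on lc_summable_on_subset[OF assms(1)] by blast
  then have "lc_sum_on {N..} f < e" using q by blast
  then show ?thesis by (rule that)
qed

lemma lc_summable_on_Sigma_nonneg:
  assumes rows: "\<And>i. i \<in> I \<Longrightarrow> lc_summable_on (K i) (\<lambda>k. a (i, k))"
    and row_sums: "lc_summable_on I (\<lambda>i. lc_sum_on (K i) (\<lambda>k. a (i, k)))"
    and nonneg: "\<And>p. p \<in> Sigma I K \<Longrightarrow> 0 \<le> a p"
  shows "lc_summable_on (Sigma I K) a"
  unfolding lc_summable_on_def
proof
  fix q
  let ?R = "{i \<in> I. \<not> vanishes_below (lc_sum_on (K i) (\<lambda>k. a (i, k))) q}"
  let ?C = "\<lambda>i. {k \<in> K i. \<not> vanishes_below (a (i, k)) q}"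
  have "{p \<in> Sigma I K. \<not> vanishes_below (a p) q} \<subseteq> Sigma ?R ?C"
  proof safe
    fix i k assume ik: "i \<in> I" "k \<in> K i" "\<not> vanishes_below (a (i, k)) q"
      and van: "vanishes_below (lc_sum_on (K i) (\<lambda>k. a (i, k))) q"
    have "a (i, k) \<le> lc_sum_on (K i) (\<lambda>k. a (i, k))"
      using lc_sum_on_ge_sum[OF rows[OF ik(1)], of "{k}"] nonneg ik(1,2) by simp
    then show False using vanishes_below_mono[OF _ _ van] nonneg ik by blast
  qed
  moreover have "finite (Sigma ?R ?C)"
    using row_sums rows by (intro finite_SigmaI) (auto simp: lc_summable_on_def)
  ultimately show "finite {p \<in> Sigma I K. \<not> vanishes_below (a p) q}" by (rule finite_subset)
qed

lemma lc_coeff_psum: "lc_coeff (lc_psum f n) r = (\<Sum>k<n. lc_coeff (f k) r)"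
  by (induction n) auto

lemma lc_psum_eq_sum: "lc_psum f n = sum f {..<n}"
  by (rule lc_eqI) (simp add: lc_coeff_psum lc_coeff_sum)

lemma lc_sums_sum_on: "lc_summable_on UNIV f \<Longrightarrow> lc_sums f (lc_sum_on UNIV f)"
  unfolding lc_sums_def lc_lim_iff
proof
  fix q assume fs: "lc_summable_on UNIV f"
  have "finite {k. \<not> vanishes_below (f k) q}" using fs by (simp add: lc_summable_on_def)
  then obtain N where N: "\<forall>k\<in>{k. \<not> vanishes_below (f k) q}. k < N" by (meson finite_nat_bounded lessThan_iff subsetD)
  show "\<exists>N. \<forall>n\<ge>N. vanishes_below (lc_psum f n - lc_sum_on UNIV f) q"
  proof (intro exI allI impI)
    fix n assume "N \<le> n"
    show "vanishes_below (lc_psum f n - lc_sum_on UNIV f) q" unfolding vanishes_below_def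
    proof (intro allI impI)
      fix r assume "r < q"
      have "lc_coeff (lc_sum_on UNIV f) r = lc_coeff (sum f {..<n}) r"
        by (rule lc_coeff_sum_on_truncate[OF fs]) (use N \<open>N \<le> n\<close> \<open>r < q\<close> in auto)
      then show "lc_coeff (lc_psum f n - lc_sum_on UNIV f) r = 0" by (simp add: lc_psum_eq_sum)
    qed
  qed
qed

lemma lc_summable_on_if_sums: "lc_sums f s \<Longrightarrow> lc_summable_on UNIV f"
  unfolding lc_summable_on_def
proof
  fix q assume "lc_sums f s"
  then obtain N where N: "\<forall>n\<ge>N. vanishes_below (lc_psum f n - s) q" unfolding lc_sums_def lc_lim_iff by blast
  have "{k. \<not> vanishes_below (f k) q} \<subseteq> {..<N}"
  proof
    fix k assume k: "k \<in> {k. \<not> vanishes_below (f k) q}"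
    show "k \<in> {..<N}"
    proof (rule ccontr)
      assume "k \<notin> {..<N}"
      then have "N \<le> k" "N \<le> Suc k" by auto
      then have "vanishes_below (lc_psum f (Suc k) - s) q" "vanishes_below (lc_psum f k - s) q" using N by blast+
      from vanishes_below_diff[OF this] have "vanishes_below (f k) q" by (simp add: lc_psum_eq_sum)
      with k show False by simp
    qed
  qed
  then show "finite {i \<in> UNIV. \<not> vanishes_below (f i) q}" by (simp add: finite_subset)
qed

lemma lc_summable_iff: "lc_summable f \<longleftrightarrow> lc_summable_on UNIV f"
  unfolding lc_summable_def using lc_sums_sum_on lc_summable_on_if_sums by blast

lemma lc_suminf_eq_sum_on: "lc_summable_on UNIV f \<Longrightarrow> lc_suminf f = lc_sum_on UNIV f"
  unfolding lc_suminf_def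
  by (rule the_equality) (auto simp: lc_sums_def intro: lc_lim_unique lc_sums_sum_on[unfolded lc_sums_def])

lemma lc_summable_on_if_lim_0: "lc_lim f lc_zero \<Longrightarrow> lc_summable_on UNIV f"
  unfolding lc_lim_iff lc_summable_on_def zero_lc_def[symmetric]
proof
  fix q assume "\<forall>q. \<exists>N. \<forall>n\<ge>N. vanishes_below (f n - 0) q"
  then obtain N where "\<forall>n\<ge>N. vanishes_below (f n) q" by auto
  then have "{i. \<not> vanishes_below (f i) q} \<subseteq> {..<N}" by (auto, meson not_le)
  then show "finite {i \<in> UNIV. \<not> vanishes_below (f i) q}" by (simp add: finite_subset)
qed

lemma lc_small_positive_series:
  assumes "0 < e"
  obtains d :: "nat \<Rightarrow> lc" where "\<And>k. 0 < d k" "lc_summable_on UNIV d" "lc_sum_on UNIV d < e"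
proof -
  obtain q0 where q0: "0 < lc_coeff e q0" "\<forall>r<q0. lc_coeff e r = 0"
    using assms by (auto simp: zero_less_lc_iff)
  define d where "d k = lc_monom (q0 + of_nat k + 1)" for k :: nat
  have van: "vanishes_below (d k) q" if "q \<le> q0 + of_nat k + 1" for k q
    using that by (auto simp: vanishes_below_def d_def lc_coeff_monom)
  have sd: "lc_summable_on UNIV d" unfolding lc_summable_on_def
  proof
    fix q
    obtain n :: nat where n: "q - q0 \<le> of_nat n" by (meson real_arch_simple)
    have "{k. \<not> vanishes_below (d k) q} \<subseteq> {..<n}"
    proof (rule subsetI, rule ccontr)
      fix k assume "k \<in> {k. \<not> vanishes_below (d k) q}" "k \<notin> {..<n}"
      then have "\<not> vanishes_below (d k) q" "(of_nat n :: rat) \<le> of_nat k" by auto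
      with n van[of q k] show False by linarith
    qed
    then show "finite {k \<in> UNIV. \<not> vanishes_below (d k) q}" by (simp add: finite_subset)
  qed
  have "vanishes_below (lc_sum_on UNIV d) (q0 + 1)"
    by (rule vanishes_below_sum_on[OF sd], rule van) simp
  then have "lc_sum_on UNIV d < e"
    unfolding less_lc_iff using q0 by (intro exI[of _ q0]) (auto simp: vanishes_below_def)
  moreover have "0 < d k" for k by (simp add: d_def lc_monom_pos)
  ultimately show ?thesis using that sd by blast
qed

section \<open>Intervals and segments\<close>

definition lc_Icc :: "lc \<Rightarrow> lc \<Rightarrow> lc set" where "lc_Icc a b = {x. a \<le> x \<and> x \<le> b}"
definition lc_Ioo :: "lc \<Rightarrow> lc \<Rightarrow> lc set" where "lc_Ioo a b = {x. a < x \<and> x < b}"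

lemma lc_interval_ab_bounds: "lc_interval_ab a b S \<Longrightarrow> a < b \<and> lc_Ioo a b \<subseteq> S \<and> S \<subseteq> lc_Icc a b"
  unfolding lc_interval_ab_def lc_le_iff_le lc_less_iff_less lc_Icc_def lc_Ioo_def by auto

lemma lc_interval_endpoints_unique:
  assumes "a < b" "lc_Ioo a b \<subseteq> S" "S \<subseteq> lc_Icc a b" "a' < b'" "lc_Ioo a' b' \<subseteq> S" "S \<subseteq> lc_Icc a' b'"
  shows "a = a' \<and> b = b'"
proof -
  have A: "\<not> a < a'" if "a < b" "lc_Ioo a b \<subseteq> S" "S \<subseteq> lc_Icc a' b'" for a b a' b' S
  proof
    assume "a < a'"
    then have "a < min a' b" using that by simp
    then obtain z where z: "a < z" "z < min a' b" using lc_dense by blast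
    then have "z \<in> S" using that by (auto simp: lc_Ioo_def)
    then have "a' \<le> z" using that by (auto simp: lc_Icc_def)
    with z show False using leD by auto
  qed
  have B: "\<not> b < b'" if "a' < b'" "lc_Ioo a' b' \<subseteq> S" "S \<subseteq> lc_Icc a b" for a b a' b' S
  proof
    assume "b < b'"
    then have "max a' b < b'" using that by simp
    then obtain z where z: "max a' b < z" "z < b'" using lc_dense by blast
    then have "z \<in> S" using that by (auto simp: lc_Ioo_def)
    then have "z \<le> b" using that by (auto simp: lc_Icc_def)
    with z show False using leD by auto
  qed
  have "\<not> a < a'" "\<not> a' < a" "\<not> b < b'" "\<not> b' < b"
    using A[of a b S a' b'] A[of a' b' S a b] B[of a' b' S a b] B[of a b S a' b'] assms by auto
  then show ?thesis by auto
qed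

lemma lc_len_interval_ab: "lc_interval_ab a b S \<Longrightarrow> lc_len S = b - a"
  unfolding lc_len_def
proof (rule the_equality)
  assume "lc_interval_ab a b S"
  then show "\<exists>a' b'. lc_interval_ab a' b' S \<and> b - a = lc_sub b' a'" by (auto simp: lc_sub_eq_diff)
next
  fix l assume "lc_interval_ab a b S" "\<exists>a' b'. lc_interval_ab a' b' S \<and> l = lc_sub b' a'"
  then obtain a' b' where "lc_interval_ab a' b' S" "l = b' - a'" by (auto simp: lc_sub_eq_diff)
  moreover note lc_interval_ab_bounds[OF \<open>lc_interval_ab a b S\<close>] lc_interval_ab_bounds[OF \<open>lc_interval_ab a' b' S\<close>]
  ultimately show "l = b - a"
    using lc_interval_endpoints_unique[of a b S a' b'] by auto
qed

lemma lc_interval_endpoints: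
  assumes "lc_interval S"
  obtains a b where "a < b" "lc_Ioo a b \<subseteq> S" "S \<subseteq> lc_Icc a b" "lc_len S = b - a"
  using assms lc_interval_ab_bounds lc_len_interval_ab unfolding lc_interval_def by blast

lemma lc_intervals_endpoints:
  assumes "\<And>i. lc_interval (S i)"
  obtains a b where "\<And>i. a i < b i" "\<And>i. lc_Ioo (a i) (b i) \<subseteq> S i" "\<And>i. S i \<subseteq> lc_Icc (a i) (b i)"
    "\<And>i. lc_len (S i) = b i - a i"
proof -
  have "\<forall>i. \<exists>p. fst p < snd p \<and> lc_Ioo (fst p) (snd p) \<subseteq> S i \<and> S i \<subseteq> lc_Icc (fst p) (snd p)
      \<and> lc_len (S i) = snd p - fst p"
    by (metis assms lc_interval_endpoints fst_conv snd_conv)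
  then obtain p where "\<forall>i. fst (p i) < snd (p i) \<and> lc_Ioo (fst (p i)) (snd (p i)) \<subseteq> S i
      \<and> S i \<subseteq> lc_Icc (fst (p i)) (snd (p i)) \<and> lc_len (S i) = snd (p i) - fst (p i)"
    by metis
  then show ?thesis using that[of "\<lambda>i. fst (p i)" "\<lambda>i. snd (p i)"] by blast
qed

lemma lc_interval_Icc: "a < b \<Longrightarrow> lc_interval (lc_Icc a b) \<and> lc_len (lc_Icc a b) = b - a"
proof -
  assume "a < b"
  then have "lc_interval_ab a b (lc_Icc a b)" unfolding lc_interval_ab_def lc_Icc_def lc_le_iff_le lc_less_iff_less by auto
  then show ?thesis using lc_len_interval_ab lc_interval_def by blast
qed

lemma lc_len_pos: "lc_interval S \<Longrightarrow> 0 < lc_len S"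
  by (metis lc_interval_endpoints diff_gt_0_iff_gt)

lemma lc_Ioo_disjoint_separated:
  assumes "a < b" "a' < b'" "lc_Ioo a b \<inter> lc_Ioo a' b' = {}"
  shows "b \<le> a' \<or> b' \<le> a"
proof (rule ccontr)
  assume "\<not> (b \<le> a' \<or> b' \<le> a)"
  then have "max a a' < min b b'" using assms(1,2) by auto
  then obtain z where "max a a' < z" "z < min b b'" using lc_dense by blast
  then have "z \<in> lc_Ioo a b \<inter> lc_Ioo a' b'" by (simp add: lc_Ioo_def)
  with assms(3) show False by blast
qed

definition seg_len :: "'a::linordered_ab_group_add \<Rightarrow> 'a \<Rightarrow> 'a" where
  "seg_len a b = max 0 (b - a)"

lemma seg_len_nonneg: "0 \<le> seg_len a b"
  by (simp add: seg_len_def)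

lemma seg_len_eq: "a \<le> b \<Longrightarrow> seg_len a b = b - a"
  by (simp add: seg_len_def)

lemma seg_len_mono: "a \<le> a' \<Longrightarrow> b' \<le> b \<Longrightarrow> seg_len a' b' \<le> seg_len a b"
  unfolding seg_len_def by (intro max.mono order_refl diff_mono)

text \<open>\<open>seg_len (max a c) (min b e)\<close> is the length of the intersection of \<open>[a, b]\<close> and \<open>[c, e]\<close>.\<close>

lemma seg_len_split3:
  fixes a b c e :: "'a::linordered_ab_group_add"
  assumes "c \<le> e"
  shows "seg_len a b = seg_len a (min b c) + seg_len (max a c) (min b e) + seg_len (max a e) b"
  using assms unfolding seg_len_def
  by (auto simp: max_def min_def algebra_simps; metis add.commute add_mono less_imp_le not_le)

lemma seg_len_split_le:
  fixes a b c c' e e' :: "'a::linordered_ab_group_add"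
  assumes "c \<le> e" "c' \<le> e'" "e \<le> c' \<or> e' \<le> c"
  shows "seg_len (max a c) (min b e)
    \<le> seg_len (max a c) (min (min b c') e) + seg_len (max (max a e') c) (min b e)"
  using assms unfolding seg_len_def
  by (auto simp: max_def min_def algebra_simps; metis add.commute add_mono less_imp_le not_le add_strict_mono)

lemma seg_len_sum_disjoint_le:
  fixes c e :: "'i \<Rightarrow> 'a::linordered_ab_group_add"
  assumes "finite F" "\<forall>n\<in>F. c n \<le> e n" "\<forall>n\<in>F. \<forall>m\<in>F. n \<noteq> m \<longrightarrow> e n \<le> c m \<or> e m \<le> c n"
  shows "(\<Sum>n\<in>F. seg_len (max a (c n)) (min b (e n))) \<le> seg_len a b"
  using assms
proof (induction F arbitrary: a b rule: finite_induct)
  case empty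
  then show ?case by (simp add: seg_len_nonneg)
next
  case (insert j F)
  have F: "\<forall>n\<in>F. c n \<le> e n" "\<forall>n\<in>F. \<forall>m\<in>F. n \<noteq> m \<longrightarrow> e n \<le> c m \<or> e m \<le> c n"
    using insert.prems by auto
  have split: "seg_len (max a (c n)) (min b (e n))
      \<le> seg_len (max a (c n)) (min (min b (c j)) (e n)) + seg_len (max (max a (e j)) (c n)) (min b (e n))"
    if "n \<in> F" for n
    using insert that by (intro seg_len_split_le) auto
  have "(\<Sum>n\<in>insert j F. seg_len (max a (c n)) (min b (e n)))
      \<le> seg_len (max a (c j)) (min b (e j))
        + ((\<Sum>n\<in>F. seg_len (max a (c n)) (min (min b (c j)) (e n)))
          + (\<Sum>n\<in>F. seg_len (max (max a (e j)) (c n)) (min b (e n))))"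
    using insert.hyps split by (simp add: sum.distrib[symmetric] sum_mono)
  also have "\<dots> \<le> seg_len (max a (c j)) (min b (e j)) + (seg_len a (min b (c j)) + seg_len (max a (e j)) b)"
    using insert.IH[OF F] by (simp add: add_mono)
  also have "\<dots> = seg_len a b"
    using seg_len_split3[of "c j" "e j" a b] insert.prems by (simp add: algebra_simps)
  finally show ?case .
qed

lemma lc_cover_segments:
  assumes "lc_cover X S"
  obtains a b where "X \<subseteq> (\<Union>k. lc_Icc (a k) (b k))" "\<And>k. seg_len (a k) (b k) = lc_len (S k)"
proof -
  obtain a b where ab: "\<And>k. a k < b k" "\<And>k. S k \<subseteq> lc_Icc (a k) (b k)" "\<And>k. lc_len (S k) = b k - a k"
    using lc_intervals_endpoints[of S] assms unfolding lc_cover_def by metis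
  have "X \<subseteq> (\<Union>k. lc_Icc (a k) (b k))" using assms ab(2) unfolding lc_cover_def by blast
  moreover have "seg_len (a k) (b k) = lc_len (S k)" for k using ab by (simp add: seg_len_eq less_imp_le)
  ultimately show ?thesis using that by blast
qed

section \<open>Outer measure\<close>

lemma lc_cover_summable_on: "lc_cover X S \<Longrightarrow> lc_summable_on UNIV (\<lambda>k. lc_len (S k))"
  unfolding lc_cover_def lc_summable_iff by blast

lemma lc_cover_sums_iff:
  "x \<in> lc_cover_sums X \<longleftrightarrow> (\<exists>S. lc_cover X S \<and> x = lc_sum_on UNIV (\<lambda>k. lc_len (S k)))"
  unfolding lc_cover_sums_def
  by (auto simp: lc_suminf_eq_sum_on[OF lc_cover_summable_on])

lemma lc_cover_sum_nonneg: "lc_cover X S \<Longrightarrow> 0 \<le> lc_sum_on UNIV (\<lambda>k. lc_len (S k))"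
  by (rule lc_sum_on_nonneg[OF lc_cover_summable_on])
    (auto simp: lc_cover_def intro: less_imp_le lc_len_pos)

lemma lc_is_inf_iff:
  "lc_is_inf X m \<longleftrightarrow> (\<forall>x\<in>X. m \<le> x) \<and> (\<forall>m'. (\<forall>x\<in>X. m' \<le> x) \<longrightarrow> m' \<le> m)"
  by (simp add: lc_is_inf_def lc_le_iff_le)

lemma lc_is_inf_unique: "lc_is_inf X m \<Longrightarrow> lc_is_inf X m' \<Longrightarrow> m = m'"
  unfolding lc_is_inf_iff by (meson order_antisym)

lemma lc_is_infI_approx:
  assumes "\<forall>x\<in>X. m \<le> x" "\<And>e. 0 < e \<Longrightarrow> \<exists>x\<in>X. x < m + e"
  shows "lc_is_inf X m"
  unfolding lc_is_inf_iff
proof (intro conjI allI impI)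
  fix m' assume lb: "\<forall>x\<in>X. m' \<le> x"
  show "m' \<le> m"
  proof (rule ccontr)
    assume "\<not> m' \<le> m"
    then obtain x where "x \<in> X" "x < m + (m' - m)" using assms(2)[of "m' - m"] by (auto simp: not_le)
    with lb show False by (simp add: not_le[symmetric])
  qed
qed (use assms(1) in blast)

lemma lc_Mu_eqI: "lc_is_inf (lc_cover_sums X) m \<Longrightarrow> lc_Mu X = m"
  unfolding lc_Mu_def by (rule the_equality) (auto intro: lc_is_inf_unique)

lemma lc_Mu_is_inf: "lc_outer_measurable X \<Longrightarrow> lc_is_inf (lc_cover_sums X) (lc_Mu X)"
proof -
  assume "lc_outer_measurable X"
  then obtain m where m: "lc_is_inf (lc_cover_sums X) m" unfolding lc_outer_measurable_def by blast
  with lc_Mu_eqI[OF m] show ?thesis by simp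
qed

lemma lc_Mu_le_cover:
  "lc_outer_measurable X \<Longrightarrow> lc_cover X S \<Longrightarrow> lc_Mu X \<le> lc_sum_on UNIV (\<lambda>k. lc_len (S k))"
proof -
  assume "lc_outer_measurable X" "lc_cover X S"
  moreover have "lc_sum_on UNIV (\<lambda>k. lc_len (S k)) \<in> lc_cover_sums X"
    using \<open>lc_cover X S\<close> lc_cover_sums_iff by blast
  ultimately show ?thesis using lc_Mu_is_inf unfolding lc_is_inf_iff by blast
qed

lemma lc_Mu_approx_cover:
  assumes "lc_outer_measurable X" "0 < e"
  obtains S where "lc_cover X S" "lc_sum_on UNIV (\<lambda>k. lc_len (S k)) < lc_Mu X + e"
proof -
  have "\<not> lc_Mu X + e \<le> lc_Mu X" using assms(2) by simp
  then obtain x where "x \<in> lc_cover_sums X" "x < lc_Mu X + e"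
    using lc_Mu_is_inf[OF assms(1)] unfolding lc_is_inf_iff by (meson not_le)
  then show ?thesis using that unfolding lc_cover_sums_iff by auto
qed

lemma lc_Mu_nonneg: "lc_outer_measurable X \<Longrightarrow> 0 \<le> lc_Mu X"
proof -
  assume "lc_outer_measurable X"
  moreover have "\<forall>x\<in>lc_cover_sums X. 0 \<le> x"
    using lc_cover_sum_nonneg lc_cover_sums_iff by auto
  ultimately show ?thesis using lc_Mu_is_inf unfolding lc_is_inf_iff by blast
qed

lemma lc_cauchy_converges:
  fixes xs :: "nat \<Rightarrow> lc"
  assumes cauchy: "\<And>i j. j \<le> i \<Longrightarrow> vanishes_below (xs i - xs j) (of_nat j)"
  obtains L where "lc_lim xs L"
proof -
  define N :: "rat \<Rightarrow> nat" where "N r = nat \<lceil>r\<rceil> + 1" for r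
  have N_gt: "r < of_nat (N r)" for r
  proof -
    have "r \<le> of_int \<lceil>r\<rceil>" by simp
    also have "\<dots> \<le> of_nat (nat \<lceil>r\<rceil>)" by simp
    finally show ?thesis unfolding N_def by simp
  qed
  have N_mono: "r \<le> q \<Longrightarrow> N r \<le> N q" for r q
    unfolding N_def by (simp add: ceiling_mono nat_mono)
  define Lf where "Lf r = lc_coeff (xs (N r)) r" for r
  have stable: "lc_coeff (xs n) r = Lf r" if "r < q" "N q \<le> n" for r q n
  proof -
    have "N r \<le> n" using N_mono[of r q] that by simp
    then have "vanishes_below (xs n - xs (N r)) (of_nat (N r))" by (rule cauchy)
    then show ?thesis unfolding Lf_def using N_gt[of r] by (rule vanishes_below_diff_coeff_eq)
  qed
  have "left_finite Lf" unfolding left_finite_def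
  proof
    fix q
    have "{r. r < q \<and> Lf r \<noteq> 0} \<subseteq> {r. r < q \<and> lc_coeff (xs (N q)) r \<noteq> 0}"
      using stable by auto
    moreover have "finite {r. r < q \<and> lc_coeff (xs (N q)) r \<noteq> 0}"
      using left_finite_lc_coeff by (simp add: left_finite_def)
    ultimately show "finite {r. r < q \<and> Lf r \<noteq> 0}" by (rule finite_subset)
  qed
  then have "\<forall>n\<ge>N q. vanishes_below (xs n - Abs_lc Lf) q" for q
    using stable by (simp add: vanishes_below_def lc_coeff_Abs)
  then have "lc_lim xs (Abs_lc Lf)" unfolding lc_lim_iff by blast
  then show ?thesis by (rule that)
qed

lemma lc_lim_le_if_less_add_monom:
  fixes xs :: "nat \<Rightarrow> lc"
  assumes lim: "lc_lim xs L" and close: "\<And>j. xs j < x + lc_monom (of_nat j)"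
  shows "L \<le> x"
proof (rule ccontr)
  assume "\<not> L \<le> x"
  define d where "d = lc_half (L - x)"
  have d: "0 < d" "d + d = L - x" using \<open>\<not> L \<le> x\<close> lc_half_pos lc_half_add_half by (auto simp: d_def)
  from vanishes_below_bounded[OF d(1)] obtain q
    where q: "\<forall>z. vanishes_below z q \<longrightarrow> z < d \<and> - d < z" by blast
  from lim obtain N where N: "\<forall>n\<ge>N. vanishes_below (xs n - L) q" unfolding lc_lim_iff by blast
  define j where "j = max N (nat \<lceil>q\<rceil>)"
  have "q \<le> of_nat (nat \<lceil>q\<rceil>)" by (rule of_nat_ceiling)
  also have "\<dots> \<le> of_nat j" unfolding j_def by simp
  finally have "vanishes_below (lc_monom (of_nat j)) q" by (auto simp: vanishes_below_def lc_coeff_monom)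
  then have "x + lc_monom (of_nat j) < x + d" using q by simp
  moreover have "vanishes_below (xs j - L) q" using N by (simp add: j_def)
  then have "L - d < xs j" using q by (auto simp: algebra_simps)
  ultimately have "L - d < x + d" using close[of j] by (meson less_trans)
  then have "L - (d + d) < x" by (simp add: algebra_simps)
  with d show False by simp
qed

text \<open>Approximating pairs with gap below \<open>lc_monom j\<close> form a Cauchy sequence whose limit is the infimum.\<close>

lemma lc_is_inf_exists:
  assumes approx: "\<And>e. 0 < e \<Longrightarrow> \<exists>x\<in>X. \<exists>l. (\<forall>y\<in>X. l \<le> y) \<and> x - l < e"
  shows "\<exists>m. lc_is_inf X m"
proof -
  have "\<forall>j::nat. \<exists>x l. x \<in> X \<and> (\<forall>y\<in>X. l \<le> y) \<and> x - l < lc_monom (of_nat j)"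
    using approx lc_monom_pos by blast
  then have "\<forall>j::nat. \<exists>p. fst p \<in> X \<and> (\<forall>y\<in>X. snd p \<le> y) \<and> fst p - snd p < lc_monom (of_nat j)"
    by simp
  from choice[OF this] obtain p where p: "\<forall>j::nat. fst (p j) \<in> X \<and> (\<forall>y\<in>X. snd (p j) \<le> y)
      \<and> fst (p j) - snd (p j) < lc_monom (of_nat j)"
    by (rule exE)
  define xs where "xs j = fst (p j)" for j
  define ls where "ls j = snd (p j)" for j
  have xl: "\<And>j. xs j \<in> X" "\<And>j. \<forall>y\<in>X. ls j \<le> y" "\<And>j. xs j - ls j < lc_monom (of_nat j)"
    using p by (auto simp: xs_def ls_def)
  have monom_le: "lc_monom (of_nat i) \<le> lc_monom (of_nat j)" if "j \<le> i" for i j :: nat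
    using lc_monom_strict_antimono[of "of_nat j" "of_nat i"] that by (cases "i = j") auto
  have "vanishes_below (xs i - xs j) (of_nat j)" if "j \<le> i" for i j
  proof (rule vanishes_below_if_bounded)
    have "ls i \<le> xs j" "ls j \<le> xs i" using xl by auto
    have "xs i - xs j \<le> xs i - ls i" using \<open>ls i \<le> xs j\<close> by simp
    also have "\<dots> < lc_monom (of_nat i)" using xl by auto
    also have "\<dots> \<le> lc_monom (of_nat j)" using monom_le that by auto
    finally show "xs i - xs j < lc_monom (of_nat j)" .
    have "- lc_monom (of_nat j) < ls j - xs j" using xl(3)[of j] by (simp add: algebra_simps)
    also have "\<dots> \<le> xs i - xs j" using \<open>ls j \<le> xs i\<close> by simp
    finally show "- lc_monom (of_nat j) < xs i - xs j" .
  qed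
  then obtain L where lim: "lc_lim xs L" by (rule lc_cauchy_converges)
  have "L \<le> x" if "x \<in> X" for x
  proof (rule lc_lim_le_if_less_add_monom[OF lim])
    fix j
    have "xs j < ls j + lc_monom (of_nat j)" using xl(3)[of j] by (simp add: algebra_simps)
    also have "\<dots> \<le> x + lc_monom (of_nat j)" using xl(2) that by simp
    finally show "xs j < x + lc_monom (of_nat j)" .
  qed
  moreover have "m' \<le> L" if "\<forall>x\<in>X. m' \<le> x" for m'
    using lc_lim_ge[OF lim] xl(1) that by blast
  ultimately show ?thesis unfolding lc_is_inf_iff by blast
qed

text \<open>Segments may be degenerate; the \<open>k\<close>-th one is widened on both sides by a positive \<open>d k\<close>.\<close>

lemma lc_cover_from_segments:
  fixes a b :: "'i \<Rightarrow> lc"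
  assumes I: "countable I" "infinite I" and X: "X \<subseteq> (\<Union>i\<in>I. lc_Icc (a i) (b i))"
    and summable: "lc_summable_on I (\<lambda>i. seg_len (a i) (b i))" and "0 < e"
  shows "\<exists>S. lc_cover X S \<and> lc_sum_on UNIV (\<lambda>k. lc_len (S k)) < lc_sum_on I (\<lambda>i. seg_len (a i) (b i)) + e"
proof -
  obtain d :: "nat \<Rightarrow> lc" where d: "\<And>k. 0 < d k" "lc_summable_on UNIV d" "lc_sum_on UNIV d < lc_half e"
    using lc_small_positive_series[OF lc_half_pos[OF \<open>0 < e\<close>]] by blast
  define g where "g = from_nat_into I"
  have bij: "bij_betw g UNIV I" unfolding g_def using bij_betw_from_nat_into[OF I] .
  define S where "S k = lc_Icc (a (g k) - d k) (max (a (g k)) (b (g k)) + d k)" for k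
  have lt: "a (g k) - d k < max (a (g k)) (b (g k)) + d k" for k
  proof -
    have "a (g k) - d k < a (g k)" using d(1)[of k] by simp
    also have "\<dots> \<le> max (a (g k)) (b (g k))" by simp
    also have "\<dots> < max (a (g k)) (b (g k)) + d k" using d(1)[of k] by simp
    finally show ?thesis .
  qed
  have len: "lc_len (S k) = seg_len (a (g k)) (b (g k)) + d k + d k" for k
    using lc_interval_Icc[OF lt[of k]] unfolding S_def seg_len_def
    by (auto simp: max_def algebra_simps)
  have summable_g: "lc_summable_on UNIV (\<lambda>k. seg_len (a (g k)) (b (g k)))"
    using lc_summable_on_reindex[OF bij summable] by (simp add: comp_def)
  have sum_g: "lc_sum_on UNIV (\<lambda>k. seg_len (a (g k)) (b (g k))) = lc_sum_on I (\<lambda>i. seg_len (a i) (b i))"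
    using lc_sum_on_reindex[OF bij summable] by (simp add: comp_def)
  have summable_S: "lc_summable_on UNIV (\<lambda>k. lc_len (S k))"
    unfolding len by (intro lc_summable_on_add summable_g d(2))
  have cover: "lc_cover X S" unfolding lc_cover_def lc_summable_iff
  proof (intro conjI allI)
    show "lc_interval (S k)" for k using lc_interval_Icc[OF lt[of k]] by (simp add: S_def)
    show "X \<subseteq> (\<Union>k. S k)"
    proof
      fix x assume "x \<in> X"
      then obtain i where i: "i \<in> I" "x \<in> lc_Icc (a i) (b i)" using X by blast
      then obtain k where k: "g k = i" using bij by (metis bij_betw_def imageE UNIV_I)
      have "x \<in> S k" using i k d(1)[of k] unfolding S_def lc_Icc_def
        by (auto simp: le_max_iff_disj intro: add_increasing2 less_imp_le order_trans[of _ "a i"])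
      then show "x \<in> (\<Union>k. S k)" by blast
    qed
  qed (rule summable_S)
  have "lc_sum_on UNIV (\<lambda>k. lc_len (S k))
      = lc_sum_on UNIV (\<lambda>k. seg_len (a (g k)) (b (g k)) + d k) + lc_sum_on UNIV d"
    unfolding len by (rule lc_sum_on_add) (rule lc_summable_on_add[OF summable_g d(2)], rule d(2))
  also have "\<dots> = lc_sum_on I (\<lambda>i. seg_len (a i) (b i)) + (lc_sum_on UNIV d + lc_sum_on UNIV d)"
    using lc_sum_on_add[OF summable_g d(2)] sum_g by (simp add: add.assoc)
  also have "\<dots> < lc_sum_on I (\<lambda>i. seg_len (a i) (b i)) + e"
    using add_strict_mono[OF d(3) d(3)] unfolding lc_half_add_half by (rule add_strict_left_mono)
  finally show ?thesis using cover by blast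
qed

lemma lc_Mu_le_if_covers:
  assumes "lc_outer_measurable X"
    and "\<And>e. 0 < e \<Longrightarrow> \<exists>S. lc_cover X S \<and> lc_sum_on UNIV (\<lambda>k. lc_len (S k)) < m + e"
  shows "lc_Mu X \<le> m"
proof (rule ccontr)
  assume "\<not> lc_Mu X \<le> m"
  then obtain S where "lc_cover X S" "lc_sum_on UNIV (\<lambda>k. lc_len (S k)) < m + (lc_Mu X - m)"
    using assms(2)[of "lc_Mu X - m"] by (auto simp: not_le)
  with lc_Mu_le_cover[OF assms(1)] show False by fastforce
qed

lemma lc_Mu_le_segments:
  fixes a b :: "nat \<Rightarrow> lc"
  assumes "lc_outer_measurable X" "X \<subseteq> (\<Union>k. lc_Icc (a k) (b k))"
    and "lc_summable_on UNIV (\<lambda>k. seg_len (a k) (b k))"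
  shows "lc_Mu X \<le> lc_sum_on UNIV (\<lambda>k. seg_len (a k) (b k))"
  using assms lc_cover_from_segments[of "UNIV :: nat set" X a b]
  by (intro lc_Mu_le_if_covers) simp_all

lemma lc_cover_from_segment_rows:
  fixes a b :: "nat \<Rightarrow> nat \<Rightarrow> lc"
  assumes X: "X \<subseteq> (\<Union>n k. lc_Icc (a n k) (b n k))"
    and rows: "\<And>n. lc_summable_on UNIV (\<lambda>k. seg_len (a n k) (b n k))"
    and row_sums: "lc_summable_on UNIV (\<lambda>n. lc_sum_on UNIV (\<lambda>k. seg_len (a n k) (b n k)))"
    and "0 < e"
  shows "\<exists>S. lc_cover X S \<and> lc_sum_on UNIV (\<lambda>k. lc_len (S k))
    < lc_sum_on UNIV (\<lambda>n. lc_sum_on UNIV (\<lambda>k. seg_len (a n k) (b n k))) + e"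
proof -
  define l where "l p = seg_len (a (fst p) (snd p)) (b (fst p) (snd p))" for p
  have "lc_summable_on (UNIV \<times> UNIV) l"
    using rows row_sums by (intro lc_summable_on_Sigma_nonneg) (auto simp: l_def seg_len_nonneg)
  moreover from this have "lc_sum_on UNIV l = lc_sum_on UNIV (\<lambda>n. lc_sum_on UNIV (\<lambda>k. seg_len (a n k) (b n k)))"
    using lc_sum_on_Sigma[of UNIV "\<lambda>_. UNIV" l] by (simp add: l_def)
  moreover have "X \<subseteq> (\<Union>p\<in>UNIV. lc_Icc (a (fst p) (snd p)) (b (fst p) (snd p)))" using X by fastforce
  ultimately show ?thesis
    using lc_cover_from_segments[of "UNIV :: (nat \<times> nat) set" X "\<lambda>p. a (fst p) (snd p)"
        "\<lambda>p. b (fst p) (snd p)" e] \<open>0 < e\<close>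
    by (simp add: l_def[abs_def] finite_prod)
qed

lemma lc_Mu_le_segment_rows:
  fixes a b :: "nat \<Rightarrow> nat \<Rightarrow> lc"
  assumes "lc_outer_measurable X" "X \<subseteq> (\<Union>n k. lc_Icc (a n k) (b n k))"
    and "\<And>n. lc_summable_on UNIV (\<lambda>k. seg_len (a n k) (b n k))"
    and "lc_summable_on UNIV (\<lambda>n. lc_sum_on UNIV (\<lambda>k. seg_len (a n k) (b n k)))"
  shows "lc_Mu X \<le> lc_sum_on UNIV (\<lambda>n. lc_sum_on UNIV (\<lambda>k. seg_len (a n k) (b n k)))"
  using assms by (intro lc_Mu_le_if_covers lc_cover_from_segment_rows)

lemma lc_Mu_approx_segments:
  assumes "lc_outer_measurable X" "0 < e"
  obtains a b :: "nat \<Rightarrow> lc" where "X \<subseteq> (\<Union>k. lc_Icc (a k) (b k))" "lc_summable_on UNIV (\<lambda>k. seg_len (a k) (b k))"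
    "lc_sum_on UNIV (\<lambda>k. seg_len (a k) (b k)) < lc_Mu X + e"
proof -
  obtain S where S: "lc_cover X S" "lc_sum_on UNIV (\<lambda>k. lc_len (S k)) < lc_Mu X + e"
    using lc_Mu_approx_cover[OF assms] .
  show ?thesis
  proof (rule lc_cover_segments[OF S(1)])
    fix a b :: "nat \<Rightarrow> lc"
    assume "X \<subseteq> (\<Union>k. lc_Icc (a k) (b k))" "\<And>k. seg_len (a k) (b k) = lc_len (S k)"
    then show ?thesis using that S lc_cover_summable_on[OF S(1)] by simp
  qed
qed

section \<open>Intersection with an interval\<close>

lemma lc_Mu_le_seg_len:
  assumes "lc_outer_measurable X" "X \<subseteq> lc_Icc a b"
  shows "lc_Mu X \<le> seg_len a b"
proof -
  define a' :: "nat \<Rightarrow> lc" where "a' k = (if k = 0 then a else 0)" for k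
  define b' :: "nat \<Rightarrow> lc" where "b' k = (if k = 0 then b else 0)" for k
  have "lc_summable_on UNIV (\<lambda>k. seg_len (a' k) (b' k))"
    "lc_sum_on UNIV (\<lambda>k. seg_len (a' k) (b' k)) = seg_len a b"
    using lc_sum_on_finite_support[of "{0}" UNIV "\<lambda>k. seg_len (a' k) (b' k)"]
    by (simp_all add: a'_def b'_def seg_len_def)
  moreover have "X \<subseteq> (\<Union>k. lc_Icc (a' k) (b' k))" using assms(2) by (force simp: a'_def b'_def)
  ultimately show ?thesis using lc_Mu_le_segments[OF assms(1)] by metis
qed

text \<open>Cutting a segment cover of \<open>A\<close> at the endpoints of \<open>J\<close>: any cover of \<open>A \<inter> J\<close> together with the
  parts of the segments outside \<open>(c, e)\<close> covers \<open>A\<close>.\<close>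

lemma lc_Mu_le_cover_Int_plus_outside:
  fixes sa sb :: "nat \<Rightarrow> lc"
  assumes A: "lc_outer_measurable A" "A \<subseteq> (\<Union>k. lc_Icc (sa k) (sb k))"
    and summable: "lc_summable_on UNIV (\<lambda>k. seg_len (sa k) (sb k))"
    and J: "lc_Ioo c e \<subseteq> J" and T: "lc_cover (A \<inter> J) T"
  shows "lc_Mu A \<le> lc_sum_on UNIV (\<lambda>k. lc_len (T k))
    + lc_sum_on UNIV (\<lambda>k. seg_len (sa k) (min (sb k) c) + seg_len (max (sa k) e) (sb k))"
proof -
  obtain ta tb :: "nat \<Rightarrow> lc"
    where T_cov: "A \<inter> J \<subseteq> (\<Union>k. lc_Icc (ta k) (tb k))" and T_len: "\<And>k. seg_len (ta k) (tb k) = lc_len (T k)"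
    using lc_cover_segments[OF T] by blast
  define a :: "nat \<Rightarrow> nat \<Rightarrow> lc"
    where "a n k = (if n = 0 then ta k else if n = 1 then sa k else if n = 2 then max (sa k) e else 0)" for n k
  define b :: "nat \<Rightarrow> nat \<Rightarrow> lc"
    where "b n k = (if n = 0 then tb k else if n = 1 then min (sb k) c else if n = 2 then sb k else 0)" for n k
  define R where "R n = lc_sum_on UNIV (\<lambda>k. seg_len (a n k) (b n k))" for n
  have left: "lc_summable_on UNIV (\<lambda>k. seg_len (sa k) (min (sb k) c))"
    by (rule lc_summable_on_dominated[OF summable]) (auto simp: seg_len_nonneg seg_len_mono)
  have right: "lc_summable_on UNIV (\<lambda>k. seg_len (max (sa k) e) (sb k))"
    by (rule lc_summable_on_dominated[OF summable]) (auto simp: seg_len_nonneg seg_len_mono)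
  have rows: "lc_summable_on UNIV (\<lambda>k. seg_len (a n k) (b n k))" for n
    using left right lc_cover_summable_on[OF T] T_len
    by (cases "n \<in> {0, 1, 2}") (auto simp: a_def b_def seg_len_def lc_sum_on_finite_support(1)[of "{}"])
  have "R n = 0" if "n \<notin> {0, 1, 2}" for n
    using that by (simp add: R_def a_def b_def seg_len_def lc_sum_on_zero)
  then have summable_R: "lc_summable_on UNIV R" and sum_R: "lc_sum_on UNIV R = R 0 + R 1 + R 2"
    using lc_sum_on_finite_support[of "{0, 1, 2}" UNIV R] by (auto simp: add.assoc)
  have cov: "A \<subseteq> (\<Union>n k. lc_Icc (a n k) (b n k))"
  proof
    fix x assume x: "x \<in> A"
    obtain k where k: "x \<in> lc_Icc (sa k) (sb k)" using x A(2) by blast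
    show "x \<in> (\<Union>n k. lc_Icc (a n k) (b n k))"
    proof (cases "x \<in> J")
      case True
      then show ?thesis using x T_cov by (force simp: a_def b_def)
    next
      case False
      then have "x \<le> c \<or> e \<le> x" using J by (auto simp: lc_Ioo_def not_le)
      then have "x \<in> lc_Icc (a 1 k) (b 1 k) \<or> x \<in> lc_Icc (a 2 k) (b 2 k)"
        using k by (auto simp: a_def b_def lc_Icc_def)
      then show ?thesis by blast
    qed
  qed
  have "lc_Mu A \<le> R 0 + R 1 + R 2"
    using lc_Mu_le_segment_rows[of A a b, OF A(1) cov rows] summable_R sum_R unfolding R_def by simp
  also have "\<dots> = lc_sum_on UNIV (\<lambda>k. lc_len (T k))
      + lc_sum_on UNIV (\<lambda>k. seg_len (sa k) (min (sb k) c) + seg_len (max (sa k) e) (sb k))"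
    using lc_sum_on_add[OF left right] T_len by (simp add: R_def a_def b_def add.assoc)
  finally show ?thesis .
qed

lemma lc_outer_measurable_Int_interval:
  assumes A: "lc_outer_measurable A" and "lc_interval J"
  shows "lc_outer_measurable (A \<inter> J)"
proof -
  obtain c e where ce: "c < e" "lc_Ioo c e \<subseteq> J" "J \<subseteq> lc_Icc c e"
    using lc_interval_endpoints[OF \<open>lc_interval J\<close>] by metis
  have "\<exists>x\<in>lc_cover_sums (A \<inter> J). \<exists>l. (\<forall>y\<in>lc_cover_sums (A \<inter> J). l \<le> y) \<and> x - l < \<epsilon>"
    if "0 < \<epsilon>" for \<epsilon>
  proof -
    define h where "h = lc_half \<epsilon>"
    have h: "0 < h" "h + h = \<epsilon>" unfolding h_def using lc_half_pos[OF that] lc_half_add_half by auto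
    obtain sa sb :: "nat \<Rightarrow> lc" where S: "A \<subseteq> (\<Union>k. lc_Icc (sa k) (sb k))"
      "lc_summable_on UNIV (\<lambda>k. seg_len (sa k) (sb k))" "lc_sum_on UNIV (\<lambda>k. seg_len (sa k) (sb k)) < lc_Mu A + h"
      using lc_Mu_approx_segments[OF A h(1)] by blast
    define inside where "inside k = seg_len (max (sa k) c) (min (sb k) e)" for k
    define outside where "outside k = seg_len (sa k) (min (sb k) c) + seg_len (max (sa k) e) (sb k)" for k
    have split: "seg_len (sa k) (sb k) = inside k + outside k" for k
      unfolding inside_def outside_def using seg_len_split3[of c e "sa k" "sb k"] ce(1)
      by (simp add: algebra_simps)
    have nonneg: "0 \<le> inside k" "0 \<le> outside k" for k
      by (simp_all add: inside_def outside_def seg_len_nonneg add_nonneg_nonneg)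
    have summable_inside: "lc_summable_on UNIV inside"
      by (rule lc_summable_on_dominated[OF S(2)]) (use split nonneg in \<open>auto simp: add_increasing2\<close>)
    have summable_outside: "lc_summable_on UNIV outside"
      by (rule lc_summable_on_dominated[OF S(2)]) (use split nonneg in \<open>auto simp: add_increasing\<close>)
    have total: "lc_sum_on UNIV inside + lc_sum_on UNIV outside = lc_sum_on UNIV (\<lambda>k. seg_len (sa k) (sb k))"
      using lc_sum_on_add[OF summable_inside summable_outside] split by simp
    have "A \<inter> J \<subseteq> (\<Union>k\<in>UNIV. lc_Icc (max (sa k) c) (min (sb k) e))"
      using S(1) ce(3) by (fastforce simp: lc_Icc_def)
    then obtain T where T: "lc_cover (A \<inter> J) T" "lc_sum_on UNIV (\<lambda>k. lc_len (T k)) < lc_sum_on UNIV inside + h"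
      using lc_cover_from_segments[of UNIV "A \<inter> J" "\<lambda>k. max (sa k) c" "\<lambda>k. min (sb k) e" h]
        summable_inside h(1) by (auto simp: inside_def[abs_def])
    define l where "l = lc_Mu A - lc_sum_on UNIV outside"
    have "l \<le> y" if "y \<in> lc_cover_sums (A \<inter> J)" for y
      using that lc_Mu_le_cover_Int_plus_outside[OF A S(1,2) ce(2)]
      by (auto simp: lc_cover_sums_iff l_def outside_def[abs_def] algebra_simps)
    moreover have "lc_sum_on UNIV (\<lambda>k. lc_len (T k)) - l < \<epsilon>"
    proof -
      have "lc_sum_on UNIV (\<lambda>k. lc_len (T k)) - l < lc_sum_on UNIV inside + h + lc_sum_on UNIV outside - lc_Mu A"
        using T(2) by (simp add: l_def algebra_simps)
      also have "\<dots> < h + h" using S(3) total by (simp add: algebra_simps)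
      finally show ?thesis using h(2) by simp
    qed
    ultimately show ?thesis using T(1) lc_cover_sums_iff by blast
  qed
  then show ?thesis unfolding lc_outer_measurable_def by (rule lc_is_inf_exists)
qed

section \<open>Disjoint unions of intervals\<close>

lemma lc_cover_subset: "lc_cover X S \<Longrightarrow> Y \<subseteq> X \<Longrightarrow> lc_cover Y S"
  unfolding lc_cover_def by blast

lemma lc_sum_Mu_Int_le_cover:
  fixes c e :: "'i \<Rightarrow> lc"
  assumes "finite F" and meas: "\<And>n. n \<in> F \<Longrightarrow> lc_outer_measurable (A \<inter> J n)"
    and J: "\<And>n. n \<in> F \<Longrightarrow> c n \<le> e n" "\<And>n. n \<in> F \<Longrightarrow> J n \<subseteq> lc_Icc (c n) (e n)"
    and sep: "\<And>m n. m \<in> F \<Longrightarrow> n \<in> F \<Longrightarrow> m \<noteq> n \<Longrightarrow> e m \<le> c n \<or> e n \<le> c m"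
    and T: "lc_cover (A \<inter> (\<Union>n\<in>F. J n)) T"
  shows "(\<Sum>n\<in>F. lc_Mu (A \<inter> J n)) \<le> lc_sum_on UNIV (\<lambda>k. lc_len (T k))"
proof -
  obtain ta tb :: "nat \<Rightarrow> lc"
    where T_cov: "A \<inter> (\<Union>n\<in>F. J n) \<subseteq> (\<Union>k. lc_Icc (ta k) (tb k))"
      and T_len: "\<And>k. seg_len (ta k) (tb k) = lc_len (T k)"
    using lc_cover_segments[OF T] by blast
  have summable_T: "lc_summable_on UNIV (\<lambda>k. seg_len (ta k) (tb k))"
    using lc_cover_summable_on[OF T] T_len by simp
  define R where "R n k = seg_len (max (ta k) (c n)) (min (tb k) (e n))" for n k
  have summable_R: "lc_summable_on UNIV (R n)" for n
    by (rule lc_summable_on_dominated[OF summable_T]) (auto simp: R_def seg_len_nonneg seg_len_mono)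
  have "lc_Mu (A \<inter> J n) \<le> lc_sum_on UNIV (R n)" if "n \<in> F" for n
  proof -
    have "A \<inter> J n \<subseteq> (\<Union>k. lc_Icc (max (ta k) (c n)) (min (tb k) (e n)))"
    proof
      fix x assume x: "x \<in> A \<inter> J n"
      have "x \<in> A \<inter> (\<Union>n\<in>F. J n)" using x that by blast
      then obtain k where "x \<in> lc_Icc (ta k) (tb k)" using T_cov by blast
      moreover have "x \<in> lc_Icc (c n) (e n)" using x J(2)[OF that] by blast
      ultimately have "x \<in> lc_Icc (max (ta k) (c n)) (min (tb k) (e n))" by (simp add: lc_Icc_def)
      then show "x \<in> (\<Union>k. lc_Icc (max (ta k) (c n)) (min (tb k) (e n)))" by blast
    qed
    then show ?thesis unfolding R_def
      by (rule lc_Mu_le_segments[OF meas[OF that]]) (rule summable_R[of n, unfolded R_def])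
  qed
  then have "(\<Sum>n\<in>F. lc_Mu (A \<inter> J n)) \<le> (\<Sum>n\<in>F. lc_sum_on UNIV (R n))"
    by (rule sum_mono)
  also have "\<dots> = lc_sum_on UNIV (\<lambda>k. \<Sum>n\<in>F. R n k)"
    by (rule lc_sum_on_sum[symmetric]) (use \<open>finite F\<close> summable_R in auto)
  also have "\<dots> \<le> lc_sum_on UNIV (\<lambda>k. seg_len (ta k) (tb k))"
  proof (rule lc_sum_on_mono)
    show "lc_summable_on UNIV (\<lambda>k. \<Sum>n\<in>F. R n k)"
      using \<open>finite F\<close> summable_R by (intro lc_summable_on_sum)
    show "(\<Sum>n\<in>F. R n k) \<le> seg_len (ta k) (tb k)" for k
      unfolding R_def using \<open>finite F\<close> J(1) sep by (intro seg_len_sum_disjoint_le) auto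
  qed (rule summable_T)
  finally show ?thesis using T_len by simp
qed

lemma lc_sum_on_Mu_Int_le_cover:
  fixes c e :: "nat \<Rightarrow> lc"
  assumes meas: "\<And>n. lc_outer_measurable (A \<inter> J n)"
    and J: "\<And>n. c n \<le> e n" "\<And>n. J n \<subseteq> lc_Icc (c n) (e n)"
    and sep: "\<And>m n. m \<noteq> n \<Longrightarrow> e m \<le> c n \<or> e n \<le> c m"
    and summable: "lc_summable_on UNIV (\<lambda>n. lc_Mu (A \<inter> J n))"
    and T: "lc_cover (A \<inter> (\<Union>n. J n)) T"
  shows "lc_sum_on UNIV (\<lambda>n. lc_Mu (A \<inter> J n)) \<le> lc_sum_on UNIV (\<lambda>k. lc_len (T k))"
proof (rule lc_lim_le)
  show "lc_lim (\<lambda>N. \<Sum>n<N. lc_Mu (A \<inter> J n)) (lc_sum_on UNIV (\<lambda>n. lc_Mu (A \<inter> J n)))"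
    using lc_sums_sum_on[OF summable] unfolding lc_sums_def lc_psum_eq_sum .
  fix N
  show "(\<Sum>n<N. lc_Mu (A \<inter> J n)) \<le> lc_sum_on UNIV (\<lambda>k. lc_len (T k))"
  proof (rule lc_sum_Mu_Int_le_cover[OF finite_lessThan meas J sep])
    show "lc_cover (A \<inter> (\<Union>n\<in>{..<N}. J n)) T" using T by (rule lc_cover_subset) auto
  qed
qed

lemma lc_Mu_approx_segment_rows:
  fixes X :: "nat \<Rightarrow> lc set" and d :: "nat \<Rightarrow> lc"
  assumes "\<And>n. lc_outer_measurable (X n)" "\<And>n. 0 < d n"
  obtains a b :: "nat \<Rightarrow> nat \<Rightarrow> lc"
  where "\<And>n. X n \<subseteq> (\<Union>k. lc_Icc (a n k) (b n k))" "\<And>n. lc_summable_on UNIV (\<lambda>k. seg_len (a n k) (b n k))"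
    "\<And>n. lc_sum_on UNIV (\<lambda>k. seg_len (a n k) (b n k)) < lc_Mu (X n) + d n"
proof -
  have "\<forall>n. \<exists>p :: (nat \<Rightarrow> lc) \<times> (nat \<Rightarrow> lc). X n \<subseteq> (\<Union>k. lc_Icc (fst p k) (snd p k))
      \<and> lc_summable_on UNIV (\<lambda>k. seg_len (fst p k) (snd p k))
      \<and> lc_sum_on UNIV (\<lambda>k. seg_len (fst p k) (snd p k)) < lc_Mu (X n) + d n"
  proof
    fix n
    show "\<exists>p :: (nat \<Rightarrow> lc) \<times> (nat \<Rightarrow> lc). X n \<subseteq> (\<Union>k. lc_Icc (fst p k) (snd p k))
      \<and> lc_summable_on UNIV (\<lambda>k. seg_len (fst p k) (snd p k))
      \<and> lc_sum_on UNIV (\<lambda>k. seg_len (fst p k) (snd p k)) < lc_Mu (X n) + d n"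
    proof (rule lc_Mu_approx_segments[OF assms(1)[of n] assms(2)[of n]])
      fix a b :: "nat \<Rightarrow> lc"
      assume "X n \<subseteq> (\<Union>k. lc_Icc (a k) (b k))" "lc_summable_on UNIV (\<lambda>k. seg_len (a k) (b k))"
        "lc_sum_on UNIV (\<lambda>k. seg_len (a k) (b k)) < lc_Mu (X n) + d n"
      then show ?thesis by (intro exI[of _ "(a, b)"]) simp
    qed
  qed
  from choice[OF this] obtain p :: "nat \<Rightarrow> (nat \<Rightarrow> lc) \<times> (nat \<Rightarrow> lc)"
    where "\<forall>n. X n \<subseteq> (\<Union>k. lc_Icc (fst (p n) k) (snd (p n) k))
      \<and> lc_summable_on UNIV (\<lambda>k. seg_len (fst (p n) k) (snd (p n) k))
      \<and> lc_sum_on UNIV (\<lambda>k. seg_len (fst (p n) k) (snd (p n) k)) < lc_Mu (X n) + d n"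
    by (rule exE)
  then show ?thesis using that[of "\<lambda>n. fst (p n)" "\<lambda>n. snd (p n)"] by blast
qed

text \<open>Segment rows for \<open>n < N\<close> and single segments for \<open>n \<ge> N\<close>, padded with degenerate segments
  into a family indexed by \<open>\<nat> \<times> \<nat>\<close>.\<close>

lemma lc_cover_from_segment_rows_tail:
  fixes a b :: "nat \<Rightarrow> nat \<Rightarrow> lc" and c e :: "nat \<Rightarrow> lc"
  assumes X: "X \<subseteq> (\<Union>n\<in>{..<N}. \<Union>k. lc_Icc (a n k) (b n k)) \<union> (\<Union>n\<in>{N..}. lc_Icc (c n) (e n))"
    and rows: "\<And>n. n < N \<Longrightarrow> lc_summable_on UNIV (\<lambda>k. seg_len (a n k) (b n k))"
    and tail: "lc_summable_on {N..} (\<lambda>n. seg_len (c n) (e n))"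
    and "0 < \<epsilon>"
  shows "\<exists>S. lc_cover X S \<and> lc_sum_on UNIV (\<lambda>k. lc_len (S k))
    < (\<Sum>n<N. lc_sum_on UNIV (\<lambda>k. seg_len (a n k) (b n k))) + lc_sum_on {N..} (\<lambda>n. seg_len (c n) (e n)) + \<epsilon>"
proof -
  define a' where "a' n k = (if n < N then a n k else if k = 0 then c n else 0)" for n k
  define b' where "b' n k = (if n < N then b n k else if k = 0 then e n else 0)" for n k
  define r where "r n = lc_sum_on UNIV (\<lambda>k. seg_len (a' n k) (b' n k))" for n
  have rows': "lc_summable_on UNIV (\<lambda>k. seg_len (a' n k) (b' n k))"
    and r_head: "n < N \<Longrightarrow> r n = lc_sum_on UNIV (\<lambda>k. seg_len (a n k) (b n k))"
    and r_tail: "\<not> n < N \<Longrightarrow> r n = seg_len (c n) (e n)" for n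
    using rows lc_sum_on_finite_support[of "{0}" UNIV "\<lambda>k. seg_len (a' n k) (b' n k)"]
    by (cases "n < N"; simp add: r_def a'_def b'_def seg_len_def)+
  have "lc_summable_on {N..} r" using tail by (rule lc_summable_on_cong) (simp add: r_tail)
  then have "lc_summable_on ({..<N} \<union> {N..}) r"
    by (intro lc_summable_on_Un[OF lc_summable_on_finite]) simp_all
  moreover have "{..<N} \<union> {N..} = (UNIV :: nat set)" by auto
  ultimately have summable_r: "lc_summable_on UNIV r" by simp
  have "X \<subseteq> (\<Union>n k. lc_Icc (a' n k) (b' n k))"
  proof
    fix x assume "x \<in> X"
    then consider (head) n k where "n < N" "x \<in> lc_Icc (a n k) (b n k)"
      | (tail) n where "N \<le> n" "x \<in> lc_Icc (c n) (e n)"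
      using X by blast
    then show "x \<in> (\<Union>n k. lc_Icc (a' n k) (b' n k))"
    proof cases
      case (head n k)
      then have "x \<in> lc_Icc (a' n k) (b' n k)" by (simp add: a'_def b'_def)
      then show ?thesis by blast
    next
      case (tail n)
      then have "x \<in> lc_Icc (a' n 0) (b' n 0)" by (simp add: a'_def b'_def)
      then show ?thesis by blast
    qed
  qed
  then have "\<exists>S. lc_cover X S \<and> lc_sum_on UNIV (\<lambda>k. lc_len (S k)) < lc_sum_on UNIV r + \<epsilon>"
    unfolding r_def[abs_def]
    by (rule lc_cover_from_segment_rows[OF _ rows' _ \<open>0 < \<epsilon>\<close>]) (use summable_r in \<open>simp add: r_def[abs_def]\<close>)
  moreover have "lc_sum_on {N..} r = lc_sum_on {N..} (\<lambda>n. seg_len (c n) (e n))"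
    by (rule lc_sum_on_cong) (simp add: r_tail)
  then have "lc_sum_on UNIV r
      = (\<Sum>n<N. lc_sum_on UNIV (\<lambda>k. seg_len (a n k) (b n k))) + lc_sum_on {N..} (\<lambda>n. seg_len (c n) (e n))"
    using lc_sum_on_split_at[OF summable_r, of N] r_head by simp
  ultimately show ?thesis by simp
qed

lemma lc_cover_approx_sum_Mu_Int:
  fixes c e :: "nat \<Rightarrow> lc"
  assumes meas: "\<And>n. lc_outer_measurable (A \<inter> J n)" and J: "\<And>n. J n \<subseteq> lc_Icc (c n) (e n)"
    and summable_J: "lc_summable_on UNIV (\<lambda>n. seg_len (c n) (e n))"
    and summable_M: "lc_summable_on UNIV (\<lambda>n. lc_Mu (A \<inter> J n))"
    and "0 < \<epsilon>"
  shows "\<exists>S. lc_cover (A \<inter> (\<Union>n. J n)) S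
    \<and> lc_sum_on UNIV (\<lambda>k. lc_len (S k)) < lc_sum_on UNIV (\<lambda>n. lc_Mu (A \<inter> J n)) + \<epsilon>"
proof -
  define h where "h = lc_half \<epsilon>"
  define h' where "h' = lc_half h"
  have h: "0 < h" "h + h = \<epsilon>" "0 < h'" "h' + h' = h"
    unfolding h_def h'_def using lc_half_pos \<open>0 < \<epsilon>\<close> lc_half_add_half by auto
  obtain N where tail: "lc_sum_on {N..} (\<lambda>n. seg_len (c n) (e n)) < h"
    using lc_sum_on_tail_less[OF summable_J h(1)] by blast
  obtain d :: "nat \<Rightarrow> lc" where d: "\<And>n. 0 < d n" "lc_summable_on UNIV d" "lc_sum_on UNIV d < h'"
    using lc_small_positive_series[OF h(3)] by blast
  obtain a b :: "nat \<Rightarrow> nat \<Rightarrow> lc" where ab: "\<And>n. A \<inter> J n \<subseteq> (\<Union>k. lc_Icc (a n k) (b n k))"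
    "\<And>n. lc_summable_on UNIV (\<lambda>k. seg_len (a n k) (b n k))"
    "\<And>n. lc_sum_on UNIV (\<lambda>k. seg_len (a n k) (b n k)) < lc_Mu (A \<inter> J n) + d n"
    using lc_Mu_approx_segment_rows[of "\<lambda>n. A \<inter> J n" d, OF meas d(1)] by blast
  have "A \<inter> (\<Union>n. J n) \<subseteq> (\<Union>n\<in>{..<N}. \<Union>k. lc_Icc (a n k) (b n k)) \<union> (\<Union>n\<in>{N..}. lc_Icc (c n) (e n))"
  proof
    fix x assume "x \<in> A \<inter> (\<Union>n. J n)"
    then obtain n where x: "x \<in> A \<inter> J n" by blast
    show "x \<in> (\<Union>n\<in>{..<N}. \<Union>k. lc_Icc (a n k) (b n k)) \<union> (\<Union>n\<in>{N..}. lc_Icc (c n) (e n))"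
    proof (cases "n < N")
      case True
      then show ?thesis using x ab(1)[of n] by blast
    next
      case False
      then show ?thesis using x J[of n] by (auto simp: not_less)
    qed
  qed
  from lc_cover_from_segment_rows_tail[OF this ab(2) lc_summable_on_subset[OF summable_J] h(3)]
  obtain S where S: "lc_cover (A \<inter> (\<Union>n. J n)) S" "lc_sum_on UNIV (\<lambda>k. lc_len (S k))
      < (\<Sum>n<N. lc_sum_on UNIV (\<lambda>k. seg_len (a n k) (b n k))) + lc_sum_on {N..} (\<lambda>n. seg_len (c n) (e n)) + h'"
    by auto
  have "(\<Sum>n<N. lc_sum_on UNIV (\<lambda>k. seg_len (a n k) (b n k))) \<le> (\<Sum>n<N. lc_Mu (A \<inter> J n) + d n)"
    using ab(3) by (intro sum_mono) (simp add: less_imp_le)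
  also have "\<dots> = (\<Sum>n<N. lc_Mu (A \<inter> J n)) + sum d {..<N}" by (rule sum.distrib)
  also have "\<dots> \<le> lc_sum_on UNIV (\<lambda>n. lc_Mu (A \<inter> J n)) + lc_sum_on UNIV d"
    using summable_M d lc_Mu_nonneg[OF meas] by (intro add_mono lc_sum_on_ge_sum) (auto simp: less_imp_le)
  finally have "(\<Sum>n<N. lc_sum_on UNIV (\<lambda>k. seg_len (a n k) (b n k))) < lc_sum_on UNIV (\<lambda>n. lc_Mu (A \<inter> J n)) + h'"
    using d(3) by (meson add_strict_left_mono le_less_trans)
  then have "(\<Sum>n<N. lc_sum_on UNIV (\<lambda>k. seg_len (a n k) (b n k))) + lc_sum_on {N..} (\<lambda>n. seg_len (c n) (e n)) + h'
      < lc_sum_on UNIV (\<lambda>n. lc_Mu (A \<inter> J n)) + h' + h + h'"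
    using tail by (intro add_strict_right_mono add_strict_mono)
  with S(2) have "lc_sum_on UNIV (\<lambda>k. lc_len (S k)) < lc_sum_on UNIV (\<lambda>n. lc_Mu (A \<inter> J n)) + h' + h + h'"
    by (rule less_trans)
  also have "\<dots> = lc_sum_on UNIV (\<lambda>n. lc_Mu (A \<inter> J n)) + \<epsilon>"
    using h(2,4) by (metis add.assoc add.commute)
  finally show ?thesis using S(1) by blast
qed

theorem mainTheorem5:
  fixes A :: "lc set" and J :: "nat \<Rightarrow> lc set"
  assumes "lc_outer_measurable A"
    and "\<forall>n. lc_interval (J n)"
    and "\<forall>m n. m \<noteq> n \<longrightarrow> J m \<inter> J n = {}"
    and "lc_lim (\<lambda>n. lc_len (J n)) lc_zero"
  shows "lc_outer_measurable (A \<inter> (\<Union>n. J n))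
    \<and> lc_summable (\<lambda>n. lc_Mu (A \<inter> J n))
    \<and> lc_Mu (A \<inter> (\<Union>n. J n)) = lc_suminf (\<lambda>n. lc_Mu (A \<inter> J n))"
proof -
  obtain c e :: "nat \<Rightarrow> lc" where ce: "\<And>n. c n < e n" "\<And>n. lc_Ioo (c n) (e n) \<subseteq> J n"
    "\<And>n. J n \<subseteq> lc_Icc (c n) (e n)" "\<And>n. lc_len (J n) = e n - c n"
    using lc_intervals_endpoints[of J] assms(2) by blast
  have len: "lc_len (J n) = seg_len (c n) (e n)" for n using ce by (simp add: seg_len_eq less_imp_le)
  have meas: "lc_outer_measurable (A \<inter> J n)" for n
    using lc_outer_measurable_Int_interval assms(1,2) by blast
  have sep: "e m \<le> c n \<or> e n \<le> c m" if "m \<noteq> n" for m n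
    using lc_Ioo_disjoint_separated[OF ce(1) ce(1)] ce(2) assms(3) that by blast
  have summable_J: "lc_summable_on UNIV (\<lambda>n. seg_len (c n) (e n))"
    using lc_summable_on_if_lim_0[OF assms(4)] by (simp add: len)
  have summable_M: "lc_summable_on UNIV (\<lambda>n. lc_Mu (A \<inter> J n))"
    using meas ce(3) by (intro lc_summable_on_dominated[OF summable_J] lc_Mu_nonneg lc_Mu_le_seg_len) auto
  have "lc_is_inf (lc_cover_sums (A \<inter> (\<Union>n. J n))) (lc_sum_on UNIV (\<lambda>n. lc_Mu (A \<inter> J n)))"
  proof (rule lc_is_infI_approx)
    show "\<forall>x\<in>lc_cover_sums (A \<inter> (\<Union>n. J n)). lc_sum_on UNIV (\<lambda>n. lc_Mu (A \<inter> J n)) \<le> x"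
      using lc_sum_on_Mu_Int_le_cover[OF meas less_imp_le[OF ce(1)] ce(3) sep summable_M]
      by (auto simp: lc_cover_sums_iff)
    show "\<exists>x\<in>lc_cover_sums (A \<inter> (\<Union>n. J n)). x < lc_sum_on UNIV (\<lambda>n. lc_Mu (A \<inter> J n)) + \<epsilon>"
      if "0 < \<epsilon>" for \<epsilon>
      using lc_cover_approx_sum_Mu_Int[OF meas ce(3) summable_J summable_M that] lc_cover_sums_iff
      by blast
  qed
  then show ?thesis
    using summable_M unfolding lc_outer_measurable_def
    by (auto simp: lc_summable_iff lc_suminf_eq_sum_on lc_Mu_eqI)
qed

end
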